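(* Let $A$ be a domain, let $F$ be a strong filtration on $A$ by $(\mathbb{Z}^M,<_1)$, and let $G$ be a strong filtration on $\mathrm{gr}_F(A)$ by $(\mathbb{Z}^L,<_2)$ which is compatible with the grading induced by $F$. Then there is a strong filtration $F\circ G$ on $A$ by $(\mathbb{Z}^{M+L},<_1\circ<_2)$, where $<_1\circ<_2$ is the lexicographic order that first compares by $<_1$ and breaks ties with $<_2$, and its associated graded algebra is $\mathrm{gr}_{F\circ G}(A)=\mathrm{gr}_G(\mathrm{gr}_F(A))$.
   Context: A filtration by a totally ordered group $(\mathbb{Z}^k,<)$ is an increasing family of subspaces $F_{\le w}$ with $F_{\le w}F_{\le u}\subset F_{\le w+u}$ and union the whole algebra; it is strong if its associated graded algebra $\bigoplus_w F_{\le w}/F_{<w}$ is a domain. Compatibility of $G$ with the grading means each graded piece $F_{\le w}/F_{<w}$ of $\mathrm{gr}_F(A)$ is itself filtered by the spaces of $G$. *)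

theory Defs
  imports "HOL-Algebra.Algebra" "HOL-Library.Function_Algebras"
begin

definition tot_ordered_group :: "('g::ab_group_add \<Rightarrow> 'g \<Rightarrow> bool) \<Rightarrow> bool" where
  "tot_ordered_group lt \<longleftrightarrow>
     (\<forall>x. \<not> lt x x) \<and> (\<forall>x y z. lt x y \<longrightarrow> lt y z \<longrightarrow> lt x z) \<and>
     (\<forall>x y. x \<noteq> y \<longrightarrow> lt x y \<or> lt y x) \<and> (\<forall>x y z. lt x y \<longrightarrow> lt (x + z) (y + z))"

text \<open>A filtration of the K-algebra A by the ordered group (g, lt):
  F w is the subspace F_{<= w}.\<close>
definition filtration ::
  "'k ring \<Rightarrow> ('k, 'b) module \<Rightarrow> ('g::ab_group_add \<Rightarrow> 'g \<Rightarrow> bool) \<Rightarrow> ('g \<Rightarrow> 'b set) \<Rightarrow> bool" where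
  "filtration K A lt F \<longleftrightarrow>
     (\<forall>w. submodule (F w) K A) \<and>
     (\<forall>w u. lt w u \<longrightarrow> F w \<subseteq> F u) \<and>
     (\<forall>w u. \<forall>x\<in>F w. \<forall>y\<in>F u. x \<otimes>\<^bsub>A\<^esub> y \<in> F (w + u)) \<and>
     (\<Union>w. F w) = carrier A"

definition flt :: "('g \<Rightarrow> 'g \<Rightarrow> bool) \<Rightarrow> ('g \<Rightarrow> 'b set) \<Rightarrow> 'g \<Rightarrow> 'b set" where
  "flt lt F w = \<Union>{F u | u. lt u w}"

definition crep :: "'b set \<Rightarrow> 'b" where
  "crep S = Eps (\<lambda>s. s \<in> S)"

text \<open>Elements of gr_F(A) are functions assigning to each degree
  w a coset of F_{<w} contained in F_{<=w}, almost all of them zero.\<close>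
definition hcls :: "('k, 'b) module \<Rightarrow> ('g \<Rightarrow> 'g \<Rightarrow> bool) \<Rightarrow> ('g \<Rightarrow> 'b set) \<Rightarrow> 'g \<Rightarrow> 'b \<Rightarrow> ('g \<Rightarrow> 'b set)" where
  "hcls A lt F w x = (\<lambda>w'. if w' = w then a_r_coset A (flt lt F w) x else flt lt F w')"

definition gr_carrier :: "('k, 'b) module \<Rightarrow> ('g \<Rightarrow> 'g \<Rightarrow> bool) \<Rightarrow> ('g \<Rightarrow> 'b set) \<Rightarrow> ('g \<Rightarrow> 'b set) set" where
  "gr_carrier A lt F =
     {f. (\<forall>w. \<exists>x\<in>F w. f w = a_r_coset A (flt lt F w) x) \<and> finite {w. f w \<noteq> flt lt F w}}"

definition gr :: "('k, 'b) module \<Rightarrow> ('g::ab_group_add \<Rightarrow> 'g \<Rightarrow> bool) \<Rightarrow> ('g \<Rightarrow> 'b set) \<Rightarrow> ('k, 'g \<Rightarrow> 'b set) module" where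
  "gr A lt F =
    \<lparr> carrier = gr_carrier A lt F,
      monoid.mult = (\<lambda>f g. \<lambda>w. a_r_coset A (flt lt F w)
          (finsum A (\<lambda>u. crep (f u) \<otimes>\<^bsub>A\<^esub> crep (g (w - u)))
             {u. f u \<noteq> flt lt F u \<and> g (w - u) \<noteq> flt lt F (w - u)})),
      monoid.one = hcls A lt F 0 \<one>\<^bsub>A\<^esub>,
      ring.zero = (\<lambda>w. flt lt F w),
      ring.add = (\<lambda>f g. \<lambda>w. a_r_coset A (flt lt F w) (crep (f w) \<oplus>\<^bsub>A\<^esub> crep (g w))),
      module.smult = (\<lambda>c f. \<lambda>w. a_r_coset A (flt lt F w) (c \<odot>\<^bsub>A\<^esub> crep (f w))) \<rparr>"

text \<open>A filtration G of gr_F(A) is compatible with the grading when every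
  G_{<=u} contains all homogeneous components of its elements, i.e. each
  graded piece F_{<=w}/F_{<w} is filtered by the G_{<=u} intersected with it.\<close>
definition grading_compatible ::
  "('g \<Rightarrow> 'g \<Rightarrow> bool) \<Rightarrow> ('g \<Rightarrow> 'b set) \<Rightarrow> ('h \<Rightarrow> ('g \<Rightarrow> 'b set) set) \<Rightarrow> bool" where
  "grading_compatible lt F G \<longleftrightarrow>
     (\<forall>u. \<forall>f\<in>G u. \<forall>w. (\<lambda>w'. if w' = w then f w else flt lt F w') \<in> G u)"

definition lexcomp ::
  "(('m \<Rightarrow> int) \<Rightarrow> ('m \<Rightarrow> int) \<Rightarrow> bool) \<Rightarrow> (('l \<Rightarrow> int) \<Rightarrow> ('l \<Rightarrow> int) \<Rightarrow> bool)
    \<Rightarrow> ('m + 'l \<Rightarrow> int) \<Rightarrow> ('m + 'l \<Rightarrow> int) \<Rightarrow> bool" where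
  "lexcomp lt1 lt2 x y \<longleftrightarrow>
     lt1 (x \<circ> Inl) (y \<circ> Inl) \<or> (x \<circ> Inl = y \<circ> Inl \<and> lt2 (x \<circ> Inr) (y \<circ> Inr))"

definition compF ::
  "('k, 'b) module \<Rightarrow> (('m \<Rightarrow> int) \<Rightarrow> ('m \<Rightarrow> int) \<Rightarrow> bool) \<Rightarrow> (('m \<Rightarrow> int) \<Rightarrow> 'b set)
    \<Rightarrow> (('l \<Rightarrow> int) \<Rightarrow> (('m \<Rightarrow> int) \<Rightarrow> 'b set) set) \<Rightarrow> ('m + 'l \<Rightarrow> int) \<Rightarrow> 'b set" where
  "compF A lt1 F G x =
     {a \<in> F (x \<circ> Inl). a \<in> flt lt1 F (x \<circ> Inl) \<or> hcls A lt1 F (x \<circ> Inl) a \<in> G (x \<circ> Inr)}"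

end

theory Submission
  imports Defs
begin

text \<open>An element \<open>a \<in> F w\<close> lies strictly below bidegree \<open>(w, u)\<close> for \<open>F \<circ> G\<close> exactly when its
  class in \<open>F w / flt F w\<close> lies strictly below \<open>u\<close> for \<open>G\<close>. The isomorphism
  \<open>gr_G (gr_F A) \<rightarrow> gr_{F\<circ>G} A\<close> sends \<open>s\<close> to the element whose \<open>(w, u)\<close>-component is the class of
  the \<open>w\<close>-component of (a representative of) \<open>s u\<close>. Compatibility of \<open>G\<close> with the grading says
  that the homogeneous components of an element of \<open>G u\<close> stay in \<open>G u\<close>; together with the
  decomposition of an element of \<open>gr_F A\<close> into its homogeneous components this shows that
  \<open>r \<equiv> r' mod flt G u\<close> iff all components of \<open>r\<close> and \<open>r'\<close> agree modulo the corresponding steps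
  of \<open>F \<circ> G\<close>, which makes the map well defined and injective. Surjectivity comes from
  reassembling, for fixed \<open>u\<close>, the \<open>(w, u)\<close>-components into one element of \<open>gr_F A\<close>, and
  multiplicativity from expanding the convolution product twice. Being isomorphic to a domain,
  \<open>gr_{F\<circ>G} A\<close> is a domain.\<close>

lemma sum_fun_eqI:
  fixes x y :: "'m + 'l \<Rightarrow> 'a"
  assumes "x \<circ> Inl = y \<circ> Inl" and "x \<circ> Inr = y \<circ> Inr"
  shows "x = y"
proof
  fix s
  show "x s = y s" using assms by (cases s) (simp_all add: fun_eq_iff)
qed

declare case_sum_o_inj [simp]

lemma case_sum_comp_Inl_Inr [simp]: "case_sum (x \<circ> Inl) (x \<circ> Inr) = x"
  by (rule sum_fun_eqI) simp_all

lemma case_sum_eq_iff: "case_sum w u = case_sum w' u' \<longleftrightarrow> w = w' \<and> u = u'"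
  by (metis case_sum_o_inj)

lemma plus_fun_comp [simp]: "((x::'a \<Rightarrow> 'b::plus) + y) \<circ> f = (x \<circ> f) + (y \<circ> f)"
  by (simp add: fun_eq_iff)

lemma zero_fun_comp [simp]: "(0::'a \<Rightarrow> 'b::zero) \<circ> f = 0"
  by (simp add: fun_eq_iff)

lemma minus_fun_comp [simp]: "((x::'a \<Rightarrow> 'b::minus) - y) \<circ> f = (x \<circ> f) - (y \<circ> f)"
  by (simp add: fun_eq_iff)

lemma case_sum_diff [simp]:
  "case_sum w u - case_sum w' u' = case_sum (w - w') (u - (u'::'l \<Rightarrow> 'a::minus))"
  by (rule sum_fun_eqI) simp_all

section \<open>Cosets and finite sums\<close>

context abelian_group
begin

lemma a_rcos_eq_iff_minus_mem:
  assumes N: "additive_subgroup N G" and a: "a \<in> carrier G" and b: "b \<in> carrier G"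
  shows "N +> a = N +> b \<longleftrightarrow> a \<ominus> b \<in> N"
proof -
  interpret abelian_subgroup N G by (rule abelian_subgroupI3[OF N abelian_group_axioms])
  show ?thesis
  proof
    assume "N +> a = N +> b"
    then have "a \<in> N +> b" using a_rcos_self[OF a] by simp
    then show "a \<ominus> b \<in> N" using a_rcos_module[OF b a] by (simp add: a_minus_def)
  next
    assume "a \<ominus> b \<in> N"
    then have "a \<in> N +> b" using a_rcos_module[OF b a] by (simp add: a_minus_def)
    then show "N +> a = N +> b" using a_repr_independence'[OF _ b] by simp
  qed
qed

lemma crep_a_rcos:
  assumes N: "additive_subgroup N G" and a: "a \<in> carrier G"
  shows "crep (N +> a) \<in> carrier G" and "crep (N +> a) \<ominus> a \<in> N"
proof -
  interpret abelian_subgroup N G by (rule abelian_subgroupI3[OF N abelian_group_axioms])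
  have mem: "crep (N +> a) \<in> N +> a"
    unfolding crep_def using a_rcos_self[OF a] by (rule someI)
  then show c: "crep (N +> a) \<in> carrier G" using a_elemrcos_carrier[OF a] by simp
  show "crep (N +> a) \<ominus> a \<in> N" using mem a_rcos_module[OF a c] by (simp add: a_minus_def)
qed

lemma a_rcos_crep:
  assumes N: "additive_subgroup N G" and a: "a \<in> carrier G"
  shows "N +> crep (N +> a) = N +> a"
  using crep_a_rcos[OF N a] a_rcos_eq_iff_minus_mem[OF N] a by blast

lemma a_rcos_eq_subgroup_iff:
  assumes N: "additive_subgroup N G" and a: "a \<in> carrier G"
  shows "N +> a = N \<longleftrightarrow> a \<in> N"
proof -
  interpret abelian_subgroup N G by (rule abelian_subgroupI3[OF N abelian_group_axioms])
  show ?thesis using a_rcos_self[OF a] a_rcos_const by blast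
qed

lemma a_rcos_subgroup_mem:
  assumes N: "additive_subgroup N G" and a: "a \<in> N"
  shows "N +> a = N"
  using a_rcos_eq_subgroup_iff[OF N additive_subgroup.a_Hcarr[OF N a]] a by blast

lemma a_rcos_zero_eq: "additive_subgroup N G \<Longrightarrow> N +> \<zero> = N"
  by (rule a_rcos_subgroup_mem) (auto intro: additive_subgroup.zero_closed)

lemma a_rcos_add_cong:
  assumes N: "additive_subgroup N G"
    and c: "a \<in> carrier G" "a' \<in> carrier G" "b \<in> carrier G" "b' \<in> carrier G"
    and e1: "N +> a = N +> a'" and e2: "N +> b = N +> b'"
  shows "N +> (a \<oplus> b) = N +> (a' \<oplus> b')"
proof -
  have "a \<ominus> a' \<in> N" "b \<ominus> b' \<in> N" using a_rcos_eq_iff_minus_mem[OF N] c e1 e2 by auto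
  then have "(a \<ominus> a') \<oplus> (b \<ominus> b') \<in> N" by (rule additive_subgroup.a_closed[OF N])
  moreover have "(a \<ominus> a') \<oplus> (b \<ominus> b') = (a \<oplus> b) \<ominus> (a' \<oplus> b')"
    using c by (simp add: a_minus_def minus_add a_ac)
  ultimately show ?thesis using a_rcos_eq_iff_minus_mem[OF N] c by simp
qed

lemma a_rcos_finsum_cong:
  assumes N: "additive_subgroup N G" and fin: "finite I"
    and f: "f \<in> I \<rightarrow> carrier G" and g: "g \<in> I \<rightarrow> carrier G"
    and e: "\<And>i. i \<in> I \<Longrightarrow> N +> f i = N +> g i"
  shows "N +> finsum G f I = N +> finsum G g I"
  using fin f g e
proof (induction I rule: finite_induct)
  case empty
  then show ?case by simp
next
  case (insert x I)
  have "finsum G f (insert x I) = f x \<oplus> finsum G f I"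
    "finsum G g (insert x I) = g x \<oplus> finsum G g I"
    using insert by (auto intro: finsum_insert)
  moreover have "N +> (f x \<oplus> finsum G f I) = N +> (g x \<oplus> finsum G g I)"
    using insert by (intro a_rcos_add_cong[OF N]) (auto intro: finsum_closed)
  ultimately show ?case by simp
qed

lemma finsum_additive_subgroup_closed:
  assumes N: "additive_subgroup N G" and fin: "finite I" and f: "f \<in> I \<rightarrow> N"
  shows "finsum G f I \<in> N"
  using fin f
proof (induction I rule: finite_induct)
  case empty
  then show ?case using additive_subgroup.zero_closed[OF N] by simp
next
  case (insert x I)
  have "f \<in> insert x I \<rightarrow> carrier G" using insert(4) additive_subgroup.a_Hcarr[OF N] by blast
  then have "finsum G f (insert x I) = f x \<oplus> finsum G f I"
    using insert by (intro finsum_insert) auto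
  then show ?case using insert additive_subgroup.a_closed[OF N] by auto
qed

lemma a_rcos_finsum_mono_neutral:
  assumes N: "additive_subgroup N G" and fin: "finite J" and IJ: "I \<subseteq> J"
    and f: "f \<in> J \<rightarrow> carrier G" and z: "\<And>i. i \<in> J - I \<Longrightarrow> f i \<in> N"
  shows "N +> finsum G f J = N +> finsum G f I"
proof -
  define h where "h = (\<lambda>i. if i \<in> I then f i else \<zero>)"
  have "finsum G f I = finsum G h J"
    by (rule add.finprod_mono_neutral_cong_left[OF fin IJ]) (use f in \<open>auto simp: h_def\<close>)
  moreover have "N +> finsum G f J = N +> finsum G h J"
    using f z a_rcos_subgroup_mem[OF N] a_rcos_zero_eq[OF N]
    by (intro a_rcos_finsum_cong[OF N fin]) (auto simp: h_def)
  ultimately show ?thesis by simp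
qed

lemma a_rcos_eq_mono:
  assumes N: "additive_subgroup N G" and N': "additive_subgroup N' G" and sub: "N \<subseteq> N'"
    and c: "a \<in> carrier G" "b \<in> carrier G" and e: "N +> a = N +> b"
  shows "N' +> a = N' +> b"
  using a_rcos_eq_iff_minus_mem[OF N c] a_rcos_eq_iff_minus_mem[OF N' c] e sub by blast

end

lemma (in abelian_monoid) finsum_Sigma:
  assumes fin: "finite U" and finV: "\<And>u. u \<in> U \<Longrightarrow> finite (V u)"
    and g: "\<And>u v. u \<in> U \<Longrightarrow> v \<in> V u \<Longrightarrow> g (u, v) \<in> carrier G"
  shows "finsum G (\<lambda>u. finsum G (\<lambda>v. g (u, v)) (V u)) U = finsum G g (Sigma U V)"
  using fin finV g
proof (induction U rule: finite_induct)
  case empty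
  then show ?case by simp
next
  case (insert a U)
  have inner: "(\<lambda>u. finsum G (\<lambda>v. g (u, v)) (V u)) \<in> U \<rightarrow> carrier G"
    using insert by (auto intro!: finsum_closed)
  have "finsum G (\<lambda>u. finsum G (\<lambda>v. g (u, v)) (V u)) (insert a U)
      = finsum G (\<lambda>v. g (a, v)) (V a) \<oplus> finsum G (\<lambda>u. finsum G (\<lambda>v. g (u, v)) (V u)) U"
    using insert inner by (intro finsum_insert) (auto intro!: finsum_closed)
  also have "finsum G (\<lambda>u. finsum G (\<lambda>v. g (u, v)) (V u)) U = finsum G g (Sigma U V)"
    using insert by auto
  also have "finsum G (\<lambda>v. g (a, v)) (V a) = finsum G g (Pair a ` V a)"
    using insert by (intro finsum_reindex[symmetric]) (auto simp: inj_on_def)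
  also have "finsum G g (Pair a ` V a) \<oplus> finsum G g (Sigma U V)
      = finsum G g (Pair a ` V a \<union> Sigma U V)"
    using insert by (intro finsum_Un_disjoint[symmetric]) auto
  also have "Pair a ` V a \<union> Sigma U V = Sigma (insert a U) V" by auto
  finally show ?case .
qed

lemma (in abelian_monoid) finsum_reindex_case_sum:
  assumes "g \<in> (\<lambda>(u, v). case_sum v u) ` I \<rightarrow> carrier G"
  shows "finsum G g ((\<lambda>(u, v). case_sum v u) ` I) = finsum G (\<lambda>(u, v). g (case_sum v u)) I"
proof -
  have "inj_on (\<lambda>(u, v). case_sum v u) I" by (auto simp: inj_on_def case_sum_eq_iff)
  then show ?thesis using finsum_reindex[OF assms] by (simp add: case_prod_unfold)
qed

section \<open>Totally ordered groups\<close>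

lemma tot_ordered_group_irrefl: "tot_ordered_group lt \<Longrightarrow> \<not> lt x x"
  unfolding tot_ordered_group_def by blast

lemma tot_ordered_group_trans: "tot_ordered_group lt \<Longrightarrow> lt x y \<Longrightarrow> lt y z \<Longrightarrow> lt x z"
  unfolding tot_ordered_group_def by blast

lemma tot_ordered_group_total: "tot_ordered_group lt \<Longrightarrow> x \<noteq> y \<Longrightarrow> lt x y \<or> lt y x"
  unfolding tot_ordered_group_def by blast

lemma tot_ordered_group_add_right: "tot_ordered_group lt \<Longrightarrow> lt x y \<Longrightarrow> lt (x + z) (y + z)"
  unfolding tot_ordered_group_def by blast

lemma tot_ordered_group_add_left: "tot_ordered_group lt \<Longrightarrow> lt x y \<Longrightarrow> lt (z + x) (z + y)"
  using tot_ordered_group_add_right[of lt x y z] by (simp add: add.commute)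

lemma tot_ordered_group_ex_less:
  fixes lt :: "'g::ab_group_add \<Rightarrow> 'g \<Rightarrow> bool" and d :: 'g
  assumes t: "tot_ordered_group lt" and d: "d \<noteq> 0"
  shows "\<exists>u. lt u w"
proof -
  have "\<exists>e. lt e 0"
    using tot_ordered_group_total[OF t d] tot_ordered_group_add_right[OF t, of 0 d "- d"] by auto
  then obtain e where "lt e 0" by blast
  then have "lt (e + w) (0 + w)" by (rule tot_ordered_group_add_right[OF t])
  then show ?thesis by auto
qed

lemma tot_ordered_group_lexcomp:
  fixes lt1 :: "('m \<Rightarrow> int) \<Rightarrow> ('m \<Rightarrow> int) \<Rightarrow> bool"
    and lt2 :: "('l \<Rightarrow> int) \<Rightarrow> ('l \<Rightarrow> int) \<Rightarrow> bool"
  assumes t1: "tot_ordered_group lt1" and t2: "tot_ordered_group lt2"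
  shows "tot_ordered_group (lexcomp lt1 lt2)"
  unfolding tot_ordered_group_def
proof (intro conjI allI impI)
  fix x y z :: "'m + 'l \<Rightarrow> int"
  show "\<not> lexcomp lt1 lt2 x x"
    using tot_ordered_group_irrefl[OF t1, of "x \<circ> Inl"] tot_ordered_group_irrefl[OF t2, of "x \<circ> Inr"]
    unfolding lexcomp_def by simp
  show "lexcomp lt1 lt2 x z" if "lexcomp lt1 lt2 x y" "lexcomp lt1 lt2 y z"
    using that tot_ordered_group_trans[OF t1, of "x \<circ> Inl" "y \<circ> Inl" "z \<circ> Inl"]
      tot_ordered_group_trans[OF t2, of "x \<circ> Inr" "y \<circ> Inr" "z \<circ> Inr"]
    unfolding lexcomp_def by auto
  show "lexcomp lt1 lt2 x y \<or> lexcomp lt1 lt2 y x" if "x \<noteq> y"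
  proof (cases "x \<circ> Inl = y \<circ> Inl")
    case True
    then have "x \<circ> Inr \<noteq> y \<circ> Inr" using that sum_fun_eqI by blast
    then show ?thesis
      using True tot_ordered_group_total[OF t2, of "x \<circ> Inr" "y \<circ> Inr"]
      unfolding lexcomp_def by auto
  next
    case False
    then show ?thesis
      using tot_ordered_group_total[OF t1, of "x \<circ> Inl" "y \<circ> Inl"]
      unfolding lexcomp_def by blast
  qed
  show "lexcomp lt1 lt2 (x + z) (y + z)" if "lexcomp lt1 lt2 x y"
    using that tot_ordered_group_add_right[OF t1, of "x \<circ> Inl" "y \<circ> Inl" "z \<circ> Inl"]
      tot_ordered_group_add_right[OF t2, of "x \<circ> Inr" "y \<circ> Inr" "z \<circ> Inr"]
    unfolding lexcomp_def by auto
qed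

section \<open>The associated graded ring of a filtration\<close>

text \<open>Nontriviality of the group makes every \<open>flt lt F w\<close> contain \<open>\<zero>\<close>; over the trivial group
  \<open>flt lt F 0\<close> would be empty and not an additive subgroup.\<close>

locale filtered_ring = cring A for A :: "('k, 'b) module" (structure) +
  fixes K :: "'k ring" and lt :: "'g::ab_group_add \<Rightarrow> 'g \<Rightarrow> bool" and F :: "'g \<Rightarrow> 'b set"
  assumes tot: "tot_ordered_group lt" and filtration: "filtration K A lt F"
    and nontrivial_group: "\<exists>d::'g. d \<noteq> 0"
begin

lemma filt_submodule: "submodule (F w) K A"
  using filtration unfolding filtration_def by blast

lemma filt_additive_subgroup: "additive_subgroup (F w) A"
  using filt_submodule[of w] unfolding submodule_def additive_subgroup_def by blast

lemma filt_closed: "x \<in> F w \<Longrightarrow> x \<in> carrier A"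
  using additive_subgroup.a_Hcarr[OF filt_additive_subgroup] .

lemma filt_mono: "lt v w \<Longrightarrow> F v \<subseteq> F w"
  using filtration unfolding filtration_def by blast

lemma filt_mult: "a \<in> F w \<Longrightarrow> b \<in> F u \<Longrightarrow> a \<otimes> b \<in> F (w + u)"
  using filtration unfolding filtration_def by blast

lemma filt_covers: "a \<in> carrier A \<Longrightarrow> \<exists>w. a \<in> F w"
  using filtration unfolding filtration_def by blast

lemma filt_smult: "c \<in> carrier K \<Longrightarrow> a \<in> F w \<Longrightarrow> c \<odot>\<^bsub>A\<^esub> a \<in> F w"
  using submodule.smult_closed[OF filt_submodule] by blast

lemma mem_flt_iff: "a \<in> flt lt F w \<longleftrightarrow> (\<exists>v. lt v w \<and> a \<in> F v)"
  unfolding flt_def by blast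

lemma filt_subset_flt: "lt v w \<Longrightarrow> F v \<subseteq> flt lt F w"
  by (auto simp: mem_flt_iff)

lemma flt_subset_filt: "flt lt F w \<subseteq> F w"
proof
  fix x assume "x \<in> flt lt F w"
  then obtain v where "lt v w" "x \<in> F v" by (auto simp: mem_flt_iff)
  then show "x \<in> F w" using filt_mono by blast
qed

lemma filt_common_bound:
  assumes "a \<in> F v1" "b \<in> F v2"
  obtains v where "v = v1 \<or> v = v2" "a \<in> F v" "b \<in> F v"
  using assms filt_mono tot_ordered_group_total[OF tot, of v1 v2] by blast

lemma flt_additive_subgroup: "additive_subgroup (flt lt F w) A"
proof -
  obtain d :: 'g where "d \<noteq> 0" using nontrivial_group by blast
  then obtain u where u: "lt u w" using tot_ordered_group_ex_less[OF tot] by blast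
  show ?thesis
  proof (rule additive_subgroupI, rule subgroup.intro)
    show "flt lt F w \<subseteq> carrier (add_monoid A)" using flt_subset_filt filt_closed by auto
    show "\<one>\<^bsub>add_monoid A\<^esub> \<in> flt lt F w"
      using u additive_subgroup.zero_closed[OF filt_additive_subgroup[of u]]
      unfolding mem_flt_iff by auto
  next
    fix x y assume "x \<in> flt lt F w" and "y \<in> flt lt F w"
    then obtain v1 v2 where "lt v1 w" "x \<in> F v1" "lt v2 w" "y \<in> F v2"
      unfolding mem_flt_iff by blast
    then obtain v where "lt v w" "x \<in> F v" "y \<in> F v" by (metis filt_common_bound)
    then show "x \<otimes>\<^bsub>add_monoid A\<^esub> y \<in> flt lt F w"
      using additive_subgroup.a_closed[OF filt_additive_subgroup] unfolding mem_flt_iff by auto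
  next
    fix x assume "x \<in> flt lt F w"
    then obtain v where "lt v w" "x \<in> F v" unfolding mem_flt_iff by blast
    then show "inv\<^bsub>add_monoid A\<^esub> x \<in> flt lt F w"
      using additive_subgroup.a_inv_closed[OF filt_additive_subgroup]
      unfolding mem_flt_iff a_inv_def[symmetric] by blast
  qed
qed

lemma flt_mult_left: "a \<in> flt lt F w \<Longrightarrow> b \<in> F u \<Longrightarrow> a \<otimes> b \<in> flt lt F (w + u)"
  unfolding mem_flt_iff using filt_mult tot_ordered_group_add_right[OF tot] by blast

lemma flt_mult_right: "a \<in> F w \<Longrightarrow> b \<in> flt lt F u \<Longrightarrow> a \<otimes> b \<in> flt lt F (w + u)"
  unfolding mem_flt_iff using filt_mult tot_ordered_group_add_left[OF tot] by blast

lemma flt_smult: "c \<in> carrier K \<Longrightarrow> a \<in> flt lt F w \<Longrightarrow> c \<odot>\<^bsub>A\<^esub> a \<in> flt lt F w"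
  unfolding mem_flt_iff using filt_smult by blast

lemma crep_flt: "crep (flt lt F w) \<in> flt lt F w"
  unfolding crep_def by (rule someI[of _ \<zero>]) (rule additive_subgroup.zero_closed[OF flt_additive_subgroup])

lemma a_rcos_mult_cong:
  assumes a: "a \<in> carrier A" and a': "a' \<in> F y" and ea: "flt lt F y +> a = flt lt F y +> a'"
    and b: "b \<in> F z" and b': "b' \<in> carrier A" and eb: "flt lt F z +> b = flt lt F z +> b'"
  shows "flt lt F (y + z) +> (a \<otimes> b) = flt lt F (y + z) +> (a' \<otimes> b')"
proof -
  have ac: "a' \<in> carrier A" "b \<in> carrier A" using a' b filt_closed by auto
  have d1: "a \<ominus> a' \<in> flt lt F y"
    using a_rcos_eq_iff_minus_mem[OF flt_additive_subgroup a ac(1)] ea by simp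
  have d2: "b \<ominus> b' \<in> flt lt F z"
    using a_rcos_eq_iff_minus_mem[OF flt_additive_subgroup ac(2) b'] eb by simp
  have "a \<otimes> b \<ominus> a' \<otimes> b' = (a \<ominus> a') \<otimes> b \<oplus> a' \<otimes> (b \<ominus> b')"
    using a ac b'
    by (simp add: a_minus_def l_distr r_distr l_minus r_minus a_assoc)
       (simp add: a_assoc[symmetric] r_neg l_neg)
  moreover have "(a \<ominus> a') \<otimes> b \<in> flt lt F (y + z)" using flt_mult_left[OF d1 b] .
  moreover have "a' \<otimes> (b \<ominus> b') \<in> flt lt F (y + z)" using flt_mult_right[OF a' d2] .
  ultimately have "a \<otimes> b \<ominus> a' \<otimes> b' \<in> flt lt F (y + z)"
    using additive_subgroup.a_closed[OF flt_additive_subgroup] by simp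
  then show ?thesis using a_rcos_eq_iff_minus_mem[OF flt_additive_subgroup] a ac b' by simp
qed

abbreviation "Gr \<equiv> gr A lt F"

lemma gr_simps:
  "carrier Gr = gr_carrier A lt F"
  "\<zero>\<^bsub>Gr\<^esub> = (\<lambda>w. flt lt F w)"
  "\<one>\<^bsub>Gr\<^esub> = hcls A lt F 0 \<one>"
  "f \<oplus>\<^bsub>Gr\<^esub> g = (\<lambda>w. flt lt F w +> (crep (f w) \<oplus> crep (g w)))"
  "c \<odot>\<^bsub>Gr\<^esub> f = (\<lambda>w. flt lt F w +> (c \<odot>\<^bsub>A\<^esub> crep (f w)))"
  "f \<otimes>\<^bsub>Gr\<^esub> g = (\<lambda>w. flt lt F w +> (finsum A (\<lambda>u. crep (f u) \<otimes> crep (g (w - u)))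
             {u. f u \<noteq> flt lt F u \<and> g (w - u) \<noteq> flt lt F (w - u)}))"
  by (simp_all add: gr_def)

lemma gr_carrierD:
  assumes f: "f \<in> carrier Gr"
  shows "crep (f w) \<in> F w" and "f w = flt lt F w +> crep (f w)" and "crep (f w) \<in> carrier A"
    and "finite {w. f w \<noteq> flt lt F w}"
proof -
  obtain x where x: "x \<in> F w" "f w = flt lt F w +> x"
    using f unfolding gr_simps gr_carrier_def by blast
  have xc: "x \<in> carrier A" using filt_closed x(1) .
  have c: "crep (f w) \<in> carrier A" "crep (f w) \<ominus> x \<in> flt lt F w"
    using crep_a_rcos[OF flt_additive_subgroup xc] x by auto
  then have "crep (f w) = (crep (f w) \<ominus> x) \<oplus> x" using xc by (simp add: a_minus_def a_assoc l_neg)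
  moreover have "crep (f w) \<ominus> x \<in> F w" using c flt_subset_filt by blast
  ultimately show "crep (f w) \<in> F w" using additive_subgroup.a_closed[OF filt_additive_subgroup] x by metis
  show "f w = flt lt F w +> crep (f w)" using x a_rcos_crep[OF flt_additive_subgroup xc] by simp
  show "crep (f w) \<in> carrier A" using c by simp
  show "finite {w. f w \<noteq> flt lt F w}" using f unfolding gr_simps gr_carrier_def by blast
qed

lemma gr_apply_eq_flt_iff:
  assumes f: "f \<in> carrier Gr"
  shows "f w = flt lt F w \<longleftrightarrow> crep (f w) \<in> flt lt F w"
  using gr_carrierD(2,3)[OF f, of w] a_rcos_eq_subgroup_iff[OF flt_additive_subgroup] by metis

lemma gr_smult_closed:
  assumes c: "c \<in> carrier K" and f: "f \<in> carrier Gr"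
  shows "c \<odot>\<^bsub>Gr\<^esub> f \<in> carrier Gr"
proof -
  have "\<forall>w. \<exists>x\<in>F w. (c \<odot>\<^bsub>Gr\<^esub> f) w = flt lt F w +> x"
    using filt_smult[OF c gr_carrierD(1)[OF f]] unfolding gr_simps by blast
  moreover have "{w. (c \<odot>\<^bsub>Gr\<^esub> f) w \<noteq> flt lt F w} \<subseteq> {w. f w \<noteq> flt lt F w}"
    using gr_apply_eq_flt_iff[OF f] flt_smult[OF c] a_rcos_subgroup_mem[OF flt_additive_subgroup]
    unfolding gr_simps by auto
  then have "finite {w. (c \<odot>\<^bsub>Gr\<^esub> f) w \<noteq> flt lt F w}"
    using finite_subset gr_carrierD(4)[OF f] by blast
  ultimately show ?thesis unfolding gr_simps(1) gr_carrier_def by blast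
qed

lemma a_rcos_crep_gr_add:
  assumes f: "f \<in> carrier Gr" and g: "g \<in> carrier Gr"
  shows "flt lt F w +> crep ((f \<oplus>\<^bsub>Gr\<^esub> g) w) = flt lt F w +> (crep (f w) \<oplus> crep (g w))"
  unfolding gr_simps using a_rcos_crep[OF flt_additive_subgroup] gr_carrierD(3)[OF f] gr_carrierD(3)[OF g]
  by simp

lemma a_rcos_crep_gr_mult:
  assumes f: "f \<in> carrier Gr" and g: "g \<in> carrier Gr"
  shows "flt lt F w +> crep ((f \<otimes>\<^bsub>Gr\<^esub> g) w)
    = flt lt F w +> finsum A (\<lambda>u. crep (f u) \<otimes> crep (g (w - u)))
        {u. f u \<noteq> flt lt F u \<and> g (w - u) \<noteq> flt lt F (w - u)}"
  unfolding gr_simps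
  using a_rcos_crep[OF flt_additive_subgroup] gr_carrierD(3)[OF f] gr_carrierD(3)[OF g]
  by (simp add: finsum_closed)

lemma hcls_apply:
  "hcls A lt F w a w = flt lt F w +> a"
  "w' \<noteq> w \<Longrightarrow> hcls A lt F w a w' = flt lt F w'"
  unfolding hcls_def by auto

lemma hcls_closed:
  assumes a: "a \<in> F w"
  shows "hcls A lt F w a \<in> carrier Gr"
proof -
  have "\<exists>x\<in>F w'. hcls A lt F w a w' = flt lt F w' +> x" for w'
    using a hcls_apply a_rcos_zero_eq[OF flt_additive_subgroup]
      additive_subgroup.zero_closed[OF filt_additive_subgroup]
    by (cases "w' = w") metis+
  moreover have "{w'. hcls A lt F w a w' \<noteq> flt lt F w'} \<subseteq> {w}" using hcls_apply(2) by auto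
  ultimately show ?thesis unfolding gr_simps gr_carrier_def by (auto intro: finite_subset)
qed

lemma hcls_apply_neq_flt_iff:
  assumes a: "a \<in> F w"
  shows "hcls A lt F w a w' \<noteq> flt lt F w' \<longleftrightarrow> w' = w \<and> a \<notin> flt lt F w"
  using hcls_apply[where w=w and a=a] a_rcos_eq_subgroup_iff[OF flt_additive_subgroup filt_closed[OF a]]
  by (cases "w' = w") auto

lemma hcls_eq_zero:
  assumes a: "a \<in> flt lt F w"
  shows "hcls A lt F w a = \<zero>\<^bsub>Gr\<^esub>"
  using hcls_apply_neq_flt_iff[where a=a and w=w] a flt_subset_filt unfolding gr_simps by fastforce

lemma hcls_closedD:
  assumes a: "a \<in> carrier A" and h: "hcls A lt F w a \<in> carrier Gr"
  shows "a \<in> F w"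
proof -
  obtain x where x: "x \<in> F w" "flt lt F w +> a = flt lt F w +> x"
    using gr_carrierD(1,2)[OF h, of w] hcls_apply(1) by metis
  then have "a \<ominus> x \<in> F w"
    using a_rcos_eq_iff_minus_mem[OF flt_additive_subgroup a filt_closed] flt_subset_filt by blast
  then have "(a \<ominus> x) \<oplus> x \<in> F w" using x(1) additive_subgroup.a_closed[OF filt_additive_subgroup] by blast
  moreover have "(a \<ominus> x) \<oplus> x = a" using a filt_closed[OF x(1)] by (simp add: a_minus_def a_assoc l_neg)
  ultimately show ?thesis by simp
qed

lemma a_rcos_crep_hcls:
  assumes a: "a \<in> F w"
  shows "flt lt F w' +> crep (hcls A lt F w a w') = flt lt F w' +> (if w' = w then a else \<zero>)"
proof (cases "w' = w")
  case True
  then show ?thesis using hcls_apply a_rcos_crep[OF flt_additive_subgroup] filt_closed[OF a] by simp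
next
  case False
  then show ?thesis
    using hcls_apply(2)[OF False] a_rcos_crep[OF flt_additive_subgroup, of \<zero> w']
      a_rcos_zero_eq[OF flt_additive_subgroup] by simp
qed

lemma hcls_add:
  assumes a: "a \<in> F w" and b: "b \<in> F w"
  shows "hcls A lt F w (a \<oplus> b) = hcls A lt F w a \<oplus>\<^bsub>Gr\<^esub> hcls A lt F w b"
proof
  fix w'
  have ac: "a \<in> carrier A" "b \<in> carrier A" using a b filt_closed by auto
  have "flt lt F w' +> (crep (hcls A lt F w a w') \<oplus> crep (hcls A lt F w b w'))
      = flt lt F w' +> ((if w' = w then a else \<zero>) \<oplus> (if w' = w then b else \<zero>))"
    using a_rcos_crep_hcls[OF a, of w'] a_rcos_crep_hcls[OF b, of w'] ac
      gr_carrierD(3)[OF hcls_closed[OF a]] gr_carrierD(3)[OF hcls_closed[OF b]]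
    by (intro a_rcos_add_cong[OF flt_additive_subgroup]) auto
  then show "hcls A lt F w (a \<oplus> b) w' = (hcls A lt F w a \<oplus>\<^bsub>Gr\<^esub> hcls A lt F w b) w'"
    using a_rcos_zero_eq[OF flt_additive_subgroup] unfolding gr_simps
    by (cases "w' = w") (simp_all add: hcls_apply)
qed

lemma hcls_mult_support:
  assumes a: "a \<in> F w" and b: "b \<in> F v"
  shows "{u. hcls A lt F w a u \<noteq> flt lt F u \<and> hcls A lt F v b (x - u) \<noteq> flt lt F (x - u)}
    = (if x = w + v \<and> a \<notin> flt lt F w \<and> b \<notin> flt lt F v then {w} else {})"
  unfolding hcls_apply_neq_flt_iff[OF a] hcls_apply_neq_flt_iff[OF b] by (auto simp: algebra_simps)

lemma hcls_mult:
  assumes a: "a \<in> F w" and b: "b \<in> F v"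
  shows "hcls A lt F w a \<otimes>\<^bsub>Gr\<^esub> hcls A lt F v b = hcls A lt F (w + v) (a \<otimes> b)"
proof
  fix x
  have ac: "a \<in> carrier A" "b \<in> carrier A" using a b filt_closed by auto
  define S where
    "S = {u. hcls A lt F w a u \<noteq> flt lt F u \<and> hcls A lt F v b (x - u) \<noteq> flt lt F (x - u)}"
  have S: "S = (if x = w + v \<and> a \<notin> flt lt F w \<and> b \<notin> flt lt F v then {w} else {})"
    unfolding S_def by (rule hcls_mult_support[OF a b])
  have lhs: "(hcls A lt F w a \<otimes>\<^bsub>Gr\<^esub> hcls A lt F v b) x =
     flt lt F x +> finsum A (\<lambda>u. crep (hcls A lt F w a u) \<otimes> crep (hcls A lt F v b (x - u))) S"
    unfolding gr_simps S_def by simp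
  show "(hcls A lt F w a \<otimes>\<^bsub>Gr\<^esub> hcls A lt F v b) x = hcls A lt F (w + v) (a \<otimes> b) x"
  proof (cases "x = w + v \<and> a \<notin> flt lt F w \<and> b \<notin> flt lt F v")
    case True
    define p where "p = crep (hcls A lt F w a w)"
    define q where "q = crep (hcls A lt F v b v)"
    have pq: "p \<in> carrier A" "q \<in> F v" "flt lt F w +> p = flt lt F w +> a"
      "flt lt F v +> q = flt lt F v +> b"
      using crep_a_rcos(1)[OF flt_additive_subgroup] a_rcos_crep[OF flt_additive_subgroup] ac
        gr_carrierD(1)[OF hcls_closed[OF b], of v]
      unfolding p_def q_def by (auto simp: hcls_apply)
    have "finsum A (\<lambda>u. crep (hcls A lt F w a u) \<otimes> crep (hcls A lt F v b (x - u))) S = p \<otimes> q"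
      using S True pq(1) filt_closed[OF pq(2)]
        finsum_insert[of "{}" w "\<lambda>u. crep (hcls A lt F w a u) \<otimes> crep (hcls A lt F v b (x - u))"]
      unfolding p_def q_def by simp
    moreover have "flt lt F (w + v) +> (p \<otimes> q) = flt lt F (w + v) +> (a \<otimes> b)"
      using a_rcos_mult_cong[OF pq(1) a pq(3) pq(2) ac(2) pq(4)] .
    ultimately show ?thesis using lhs True by (simp add: hcls_apply)
  next
    case False
    then have "S = {}" using S by simp
    then have "(hcls A lt F w a \<otimes>\<^bsub>Gr\<^esub> hcls A lt F v b) x = flt lt F x"
      using lhs a_rcos_zero_eq[OF flt_additive_subgroup] by simp
    moreover have "hcls A lt F (w + v) (a \<otimes> b) x = flt lt F x"
    proof (cases "x = w + v")
      case True
      then have "a \<in> flt lt F w \<or> b \<in> flt lt F v" using False by simp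
      then have "a \<otimes> b \<in> flt lt F (w + v)" using flt_mult_left flt_mult_right a b by blast
      then show ?thesis using True hcls_apply a_rcos_subgroup_mem[OF flt_additive_subgroup] by simp
    next
      case False
      then show ?thesis using hcls_apply by simp
    qed
    ultimately show ?thesis by simp
  qed
qed

lemma hcls_smult:
  assumes "module K A" and a: "a \<in> F w" and c: "c \<in> carrier K"
  shows "hcls A lt F w (c \<odot>\<^bsub>A\<^esub> a) = c \<odot>\<^bsub>Gr\<^esub> hcls A lt F w a"
proof
  fix w'
  define a' where "a' = (if w' = w then a else \<zero>)"
  have ac: "a \<in> carrier A" "a' \<in> carrier A" using a filt_closed unfolding a'_def by auto
  have cc: "crep (hcls A lt F w a w') \<in> carrier A" using gr_carrierD(3)[OF hcls_closed[OF a]] .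
  have "crep (hcls A lt F w a w') \<ominus> a' \<in> flt lt F w'"
    using a_rcos_crep_hcls[OF a, of w'] a_rcos_eq_iff_minus_mem[OF flt_additive_subgroup cc ac(2)]
    unfolding a'_def by auto
  then have "c \<odot>\<^bsub>A\<^esub> (crep (hcls A lt F w a w') \<ominus> a') \<in> flt lt F w'"
    using flt_smult[OF c] by blast
  moreover have "c \<odot>\<^bsub>A\<^esub> (crep (hcls A lt F w a w') \<ominus> a')
      = c \<odot>\<^bsub>A\<^esub> crep (hcls A lt F w a w') \<ominus> c \<odot>\<^bsub>A\<^esub> a'"
    using module.smult_r_distr[OF assms(1) c cc a_inv_closed[OF ac(2)]]
      module.smult_r_minus[OF assms(1) c ac(2)]
    by (simp add: a_minus_def)
  ultimately have "c \<odot>\<^bsub>A\<^esub> crep (hcls A lt F w a w') \<ominus> c \<odot>\<^bsub>A\<^esub> a' \<in> flt lt F w'"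
    by simp
  then have "flt lt F w' +> (c \<odot>\<^bsub>A\<^esub> crep (hcls A lt F w a w')) = flt lt F w' +> (c \<odot>\<^bsub>A\<^esub> a')"
    using a_rcos_eq_iff_minus_mem[OF flt_additive_subgroup] module.smult_closed[OF assms(1) c]
      cc ac(2) by simp
  then show "hcls A lt F w (c \<odot>\<^bsub>A\<^esub> a) w' = (c \<odot>\<^bsub>Gr\<^esub> hcls A lt F w a) w'"
    using a_rcos_zero_eq[OF flt_additive_subgroup] module.smult_r_null[OF assms(1) c]
    unfolding gr_simps a'_def
    by (cases "w' = w") (simp_all add: hcls_apply)
qed

end

locale filtered_ring_cring_gr = filtered_ring +
  assumes cring_gr: "cring (gr A lt F)"

sublocale filtered_ring_cring_gr \<subseteq> GR: cring "gr A lt F"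
  by (rule cring_gr)

context filtered_ring_cring_gr
begin

lemma a_rcos_crep_gr_finsum:
  assumes fin: "finite I" and h: "h \<in> I \<rightarrow> carrier Gr"
  shows "flt lt F w +> crep (finsum Gr h I w) = flt lt F w +> finsum A (\<lambda>i. crep (h i w)) I"
  using fin h
proof (induction I rule: finite_induct)
  case empty
  then show ?case
    using crep_flt a_rcos_subgroup_mem[OF flt_additive_subgroup] a_rcos_zero_eq[OF flt_additive_subgroup]
    by (simp add: gr_simps)
next
  case (insert x I)
  have hx: "h x \<in> carrier Gr" and hI: "h \<in> I \<rightarrow> carrier Gr" using insert by auto
  have sc: "finsum Gr h I \<in> carrier Gr" using GR.finsum_closed[OF hI] .
  have pc: "(\<lambda>i. crep (h i w)) \<in> I \<rightarrow> carrier A" using hI gr_carrierD(3) by auto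
  have "finsum Gr h (insert x I) = h x \<oplus>\<^bsub>Gr\<^esub> finsum Gr h I"
    using insert hx hI by (intro GR.finsum_insert) auto
  then have "flt lt F w +> crep (finsum Gr h (insert x I) w)
      = flt lt F w +> (crep (h x w) \<oplus> crep (finsum Gr h I w))"
    using a_rcos_crep_gr_add[OF hx sc] by simp
  also have "\<dots> = flt lt F w +> (crep (h x w) \<oplus> finsum A (\<lambda>i. crep (h i w)) I)"
    using insert.IH[OF hI] gr_carrierD(3)[OF hx] gr_carrierD(3)[OF sc] finsum_closed[OF pc]
    by (intro a_rcos_add_cong[OF flt_additive_subgroup]) auto
  also have "crep (h x w) \<oplus> finsum A (\<lambda>i. crep (h i w)) I = finsum A (\<lambda>i. crep (h i w)) (insert x I)"
    using insert gr_carrierD(3) hx pc by (intro finsum_insert[symmetric]) auto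
  finally show ?case .
qed

lemma a_rcos_crep_finsum_hcls:
  assumes fin: "finite W" and b: "\<And>v. v \<in> W \<Longrightarrow> b v \<in> F v"
  shows "flt lt F w +> crep (finsum Gr (\<lambda>v. hcls A lt F v (b v)) W w)
    = flt lt F w +> (if w \<in> W then b w else \<zero>)"
proof -
  have bc: "(\<lambda>v. if w = v then b v else \<zero>) \<in> W \<rightarrow> carrier A" using filt_closed[OF b] by auto
  have hc: "(\<lambda>v. hcls A lt F v (b v)) \<in> W \<rightarrow> carrier Gr" using hcls_closed b by blast
  then have "flt lt F w +> crep (finsum Gr (\<lambda>v. hcls A lt F v (b v)) W w)
      = flt lt F w +> finsum A (\<lambda>v. crep (hcls A lt F v (b v) w)) W"
    using a_rcos_crep_gr_finsum[OF fin] by blast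
  also have "\<dots> = flt lt F w +> finsum A (\<lambda>v. if w = v then b v else \<zero>) W"
    using a_rcos_crep_hcls[OF b] gr_carrierD(3)[OF hcls_closed[OF b]] bc
    by (intro a_rcos_finsum_cong[OF flt_additive_subgroup fin]) auto
  also have "finsum A (\<lambda>v. if w = v then b v else \<zero>) W = (if w \<in> W then b w else \<zero>)"
  proof (cases "w \<in> W")
    case True
    then show ?thesis using add.finprod_singleton[OF True fin] b filt_closed by auto
  next
    case False
    then have "finsum A (\<lambda>v. if w = v then b v else \<zero>) W = finsum A (\<lambda>v. \<zero>) W"
      by (intro finsum_cong') auto
    then show ?thesis using False by simp
  qed
  finally show ?thesis .
qed

lemma gr_eq_finsum_hcls:
  assumes f: "f \<in> carrier Gr"
  shows "f = finsum Gr (\<lambda>w. hcls A lt F w (crep (f w))) {w. f w \<noteq> flt lt F w}"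
    (is "f = finsum Gr ?h ?W")
proof
  fix w
  have fin: "finite ?W" using gr_carrierD(4)[OF f] .
  have hc: "?h \<in> ?W \<rightarrow> carrier Gr" using hcls_closed gr_carrierD(1)[OF f] by blast
  have "finsum Gr ?h ?W w = flt lt F w +> crep (finsum Gr ?h ?W w)"
    using gr_carrierD(2)[OF GR.finsum_closed[OF hc]] .
  also have "\<dots> = flt lt F w +> (if w \<in> ?W then crep (f w) else \<zero>)"
    using a_rcos_crep_finsum_hcls[OF fin gr_carrierD(1)[OF f]] .
  also have "\<dots> = f w"
    using gr_carrierD(2)[OF f, of w] a_rcos_zero_eq[OF flt_additive_subgroup] by auto
  finally show "f w = finsum Gr ?h ?W w" by simp
qed

lemma a_rcos_crep_gr_finsum_mult:
  assumes fin: "finite U" and f: "f \<in> U \<rightarrow> carrier Gr" and g: "g \<in> U \<rightarrow> carrier Gr"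
  shows "flt lt F w +> crep (finsum Gr (\<lambda>i. f i \<otimes>\<^bsub>Gr\<^esub> g i) U w)
    = flt lt F w +> finsum A (\<lambda>(i, v). crep (f i v) \<otimes> crep (g i (w - v)))
        (SIGMA i:U. {v. f i v \<noteq> flt lt F v \<and> g i (w - v) \<noteq> flt lt F (w - v)})"
proof -
  define V where "V i = {v. f i v \<noteq> flt lt F v \<and> g i (w - v) \<noteq> flt lt F (w - v)}" for i
  have fi: "f i \<in> carrier Gr" and gi: "g i \<in> carrier Gr" if "i \<in> U" for i
    using f g that by auto
  have finV: "finite (V i)" if "i \<in> U" for i
    by (rule finite_subset[OF _ gr_carrierD(4)[OF fi[OF that]]]) (auto simp: V_def)
  have c: "crep (f i v) \<otimes> crep (g i (w - v)) \<in> carrier A" if "i \<in> U" for i v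
    using gr_carrierD(3)[OF fi[OF that]] gr_carrierD(3)[OF gi[OF that]] by simp
  have "flt lt F w +> crep (finsum Gr (\<lambda>i. f i \<otimes>\<^bsub>Gr\<^esub> g i) U w)
      = flt lt F w +> finsum A (\<lambda>i. crep ((f i \<otimes>\<^bsub>Gr\<^esub> g i) w)) U"
    using fi gi by (intro a_rcos_crep_gr_finsum[OF fin]) auto
  also have "\<dots> = flt lt F w +> finsum A (\<lambda>i. finsum A (\<lambda>v. crep (f i v) \<otimes> crep (g i (w - v))) (V i)) U"
  proof (rule a_rcos_finsum_cong[OF flt_additive_subgroup fin])
    show "(\<lambda>i. crep ((f i \<otimes>\<^bsub>Gr\<^esub> g i) w)) \<in> U \<rightarrow> carrier A"
      using gr_carrierD(3)[OF GR.m_closed[OF fi gi]] by blast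
    show "(\<lambda>i. finsum A (\<lambda>v. crep (f i v) \<otimes> crep (g i (w - v))) (V i)) \<in> U \<rightarrow> carrier A"
      using c by (auto intro: finsum_closed)
    show "flt lt F w +> crep ((f i \<otimes>\<^bsub>Gr\<^esub> g i) w)
        = flt lt F w +> finsum A (\<lambda>v. crep (f i v) \<otimes> crep (g i (w - v))) (V i)" if "i \<in> U" for i
      unfolding V_def by (rule a_rcos_crep_gr_mult[OF fi[OF that] gi[OF that]])
  qed
  also have "finsum A (\<lambda>i. finsum A (\<lambda>v. crep (f i v) \<otimes> crep (g i (w - v))) (V i)) U
      = finsum A (\<lambda>(i, v). crep (f i v) \<otimes> crep (g i (w - v))) (Sigma U V)"
    using finsum_Sigma[OF fin finV, where g = "\<lambda>(i, v). crep (f i v) \<otimes> crep (g i (w - v))"] c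
    by simp
  finally show ?thesis unfolding V_def .
qed

lemma a_rcos_crep_gr_minus:
  assumes f: "f \<in> carrier Gr" and g: "g \<in> carrier Gr"
  shows "flt lt F w +> crep ((f \<ominus>\<^bsub>Gr\<^esub> g) w) = flt lt F w +> (crep (f w) \<ominus> crep (g w))"
proof -
  define d where "d = f \<ominus>\<^bsub>Gr\<^esub> g"
  have dc: "d \<in> carrier Gr" unfolding d_def using f g by (rule GR.minus_closed)
  have fd: "f = d \<oplus>\<^bsub>Gr\<^esub> g"
    unfolding d_def using f g by (simp add: GR.minus_eq GR.a_assoc GR.l_neg)
  have cs: "crep (f w) \<in> carrier A" "crep (g w) \<in> carrier A" "crep (d w) \<in> carrier A"
    using gr_carrierD(3) f g dc by auto
  have "flt lt F w +> crep (f w) = flt lt F w +> (crep (d w) \<oplus> crep (g w))"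
    using a_rcos_crep_gr_add[OF dc g] fd by simp
  then have "flt lt F w +> (crep (f w) \<oplus> \<ominus> crep (g w))
      = flt lt F w +> ((crep (d w) \<oplus> crep (g w)) \<oplus> \<ominus> crep (g w))"
    using cs by (intro a_rcos_add_cong[OF flt_additive_subgroup]) auto
  also have "(crep (d w) \<oplus> crep (g w)) \<oplus> \<ominus> crep (g w) = crep (d w)"
    using cs by (simp add: a_assoc r_neg)
  finally show ?thesis using cs by (simp add: a_minus_def d_def)
qed

lemma hcls_a_inv:
  assumes a: "a \<in> F w"
  shows "hcls A lt F w (\<ominus> a) = \<ominus>\<^bsub>Gr\<^esub> hcls A lt F w a"
proof -
  have na: "\<ominus> a \<in> F w" using additive_subgroup.a_inv_closed[OF filt_additive_subgroup a] .
  have "hcls A lt F w (\<ominus> a) \<oplus>\<^bsub>Gr\<^esub> hcls A lt F w a = hcls A lt F w (\<ominus> a \<oplus> a)"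
    using hcls_add[OF na a] by simp
  also have "\<dots> = \<zero>\<^bsub>Gr\<^esub>"
    using l_neg[OF filt_closed[OF a]] hcls_eq_zero
      additive_subgroup.zero_closed[OF flt_additive_subgroup] by simp
  finally show ?thesis
    using GR.minus_equality hcls_closed[OF a] hcls_closed[OF na] by simp
qed

end

section \<open>The composite filtration\<close>

lemma ex_nonzero_fun: "\<exists>d::'a \<Rightarrow> int. d \<noteq> 0"
  by (rule exI[of _ "\<lambda>_. 1"]) (simp add: fun_eq_iff)

locale composite_filtration =
  fixes K :: "'k ring" and A :: "('k, 'b) module" (structure)
    and lt1 :: "('m \<Rightarrow> int) \<Rightarrow> ('m \<Rightarrow> int) \<Rightarrow> bool"
    and lt2 :: "('l \<Rightarrow> int) \<Rightarrow> ('l \<Rightarrow> int) \<Rightarrow> bool"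
    and F :: "('m \<Rightarrow> int) \<Rightarrow> 'b set"
    and G :: "('l \<Rightarrow> int) \<Rightarrow> (('m \<Rightarrow> int) \<Rightarrow> 'b set) set"
  assumes algebra_A: "algebra K A" and domain_A: "domain A"
    and tot1: "tot_ordered_group lt1" and tot2: "tot_ordered_group lt2"
    and filtration_F: "filtration K A lt1 F" and domain_R: "domain (gr A lt1 F)"
    and filtration_G: "filtration K (gr A lt1 F) lt2 G" and domain_S: "domain (gr (gr A lt1 F) lt2 G)"
    and compatible: "grading_compatible lt1 F G"

sublocale composite_filtration \<subseteq> FF: filtered_ring_cring_gr A K lt1 F
  using domain_A tot1 filtration_F ex_nonzero_fun domain_R
  unfolding filtered_ring_cring_gr_def filtered_ring_def filtered_ring_cring_gr_axioms_def
    filtered_ring_axioms_def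
  by (simp add: domain_def)

sublocale composite_filtration \<subseteq> GG: filtered_ring "gr A lt1 F" K lt2 G
  using domain_R tot2 filtration_G ex_nonzero_fun
  unfolding filtered_ring_def filtered_ring_axioms_def
  by (simp add: domain_def)

sublocale composite_filtration \<subseteq> SS: domain "gr (gr A lt1 F) lt2 G"
  by (rule domain_S)

context composite_filtration
begin

abbreviation "R \<equiv> gr A lt1 F"
abbreviation "S \<equiv> gr R lt2 G"
abbreviation "FG \<equiv> compF A lt1 F G"
abbreviation "T \<equiv> gr A (lexcomp lt1 lt2) FG"
abbreviation "Flt \<equiv> flt lt1 F"
abbreviation "Glt \<equiv> flt lt2 G"
abbreviation "FGlt \<equiv> flt (lexcomp lt1 lt2) FG"
abbreviation "hc \<equiv> hcls A lt1 F"

lemma zero_R_mem_G: "\<zero>\<^bsub>R\<^esub> \<in> G u"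
  by (rule additive_subgroup.zero_closed[OF GG.filt_additive_subgroup])

lemma hc_mem_Glt: "a \<in> Flt w \<Longrightarrow> hc w a \<in> Glt u"
  using FF.hcls_eq_zero additive_subgroup.zero_closed[OF GG.flt_additive_subgroup] by simp

lemma mem_compF_iff: "a \<in> FG x \<longleftrightarrow> a \<in> F (x \<circ> Inl) \<and> hc (x \<circ> Inl) a \<in> G (x \<circ> Inr)"
  unfolding compF_def using FF.hcls_eq_zero zero_R_mem_G by auto

lemma mem_compF_lt_iff: "a \<in> FGlt x \<longleftrightarrow> a \<in> F (x \<circ> Inl) \<and> hc (x \<circ> Inl) a \<in> Glt (x \<circ> Inr)"
proof
  assume "a \<in> FGlt x"
  then obtain y where y: "lexcomp lt1 lt2 y x" "a \<in> FG y" unfolding flt_def by blast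
  show "a \<in> F (x \<circ> Inl) \<and> hc (x \<circ> Inl) a \<in> Glt (x \<circ> Inr)"
  proof (cases "lt1 (y \<circ> Inl) (x \<circ> Inl)")
    case True
    then have "a \<in> Flt (x \<circ> Inl)" using y(2) FF.filt_subset_flt mem_compF_iff by blast
    then show ?thesis using FF.flt_subset_filt hc_mem_Glt by blast
  next
    case False
    then have "y \<circ> Inl = x \<circ> Inl" "lt2 (y \<circ> Inr) (x \<circ> Inr)"
      using y(1) unfolding lexcomp_def by auto
    then show ?thesis using y(2) GG.filt_subset_flt mem_compF_iff by auto
  qed
next
  assume a: "a \<in> F (x \<circ> Inl) \<and> hc (x \<circ> Inl) a \<in> Glt (x \<circ> Inr)"
  then obtain v where v: "lt2 v (x \<circ> Inr)" "hc (x \<circ> Inl) a \<in> G v" using GG.mem_flt_iff by blast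
  then have "a \<in> FG (case_sum (x \<circ> Inl) v)" using a mem_compF_iff by simp
  moreover have "lexcomp lt1 lt2 (case_sum (x \<circ> Inl) v) x" using v unfolding lexcomp_def by simp
  ultimately show "a \<in> FGlt x" unfolding flt_def by blast
qed

lemma flt_subset_compF_lt: "Flt (x \<circ> Inl) \<subseteq> FGlt x"
  using mem_compF_lt_iff FF.flt_subset_filt hc_mem_Glt by blast

text \<open>The only use of the compatibility hypothesis.\<close>

lemma hc_component_mem_G:
  assumes r: "r \<in> G u"
  shows "hc w (crep (r w)) \<in> G u"
proof -
  have "(\<lambda>w'. if w' = w then r w else Flt w') = hc w (crep (r w))"
    unfolding hcls_def using FF.gr_carrierD(2)[OF GG.filt_closed[OF r], of w]
    by (auto simp: fun_eq_iff)
  then show ?thesis using compatible r unfolding grading_compatible_def by metis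
qed

lemma crep_component_mem_compF:
  assumes r: "r \<in> G u"
  shows "crep (r w) \<in> FG (case_sum w u)"
  using hc_component_mem_G[OF r] FF.gr_carrierD(1)[OF GG.filt_closed[OF r]] mem_compF_iff by simp

lemma crep_component_mem_compF_lt:
  assumes r: "r \<in> Glt u"
  shows "crep (r w) \<in> FGlt (case_sum w u)"
proof -
  obtain v where v: "lt2 v u" "r \<in> G v" using r GG.mem_flt_iff by blast
  then have "hc w (crep (r w)) \<in> Glt u"
    using hc_component_mem_G GG.filt_subset_flt by blast
  then show ?thesis using FF.gr_carrierD(1)[OF GG.filt_closed[OF v(2)]] mem_compF_lt_iff by simp
qed

lemma compF_submodule: "submodule (FG x) K A"
proof (rule module.submoduleI[OF algebra.module[OF algebra_A]])
  show "FG x \<subseteq> carrier A" using mem_compF_iff FF.filt_closed by blast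
  show "\<zero> \<in> FG x"
    using mem_compF_iff additive_subgroup.zero_closed[OF FF.filt_additive_subgroup]
      hc_mem_Glt[OF additive_subgroup.zero_closed[OF FF.flt_additive_subgroup]]
      GG.flt_subset_filt by blast
next
  fix a b assume "a \<in> FG x" and "b \<in> FG x"
  then have aF: "a \<in> F (x \<circ> Inl)" and aG: "hc (x \<circ> Inl) a \<in> G (x \<circ> Inr)"
    and bF: "b \<in> F (x \<circ> Inl)" and bG: "hc (x \<circ> Inl) b \<in> G (x \<circ> Inr)"
    using mem_compF_iff by auto
  show "\<ominus> a \<in> FG x"
    using mem_compF_iff additive_subgroup.a_inv_closed[OF FF.filt_additive_subgroup aF]
      FF.hcls_a_inv[OF aF] additive_subgroup.a_inv_closed[OF GG.filt_additive_subgroup aG] by simp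
  show "a \<oplus> b \<in> FG x"
    using mem_compF_iff additive_subgroup.a_closed[OF FF.filt_additive_subgroup aF bF]
      FF.hcls_add[OF aF bF] additive_subgroup.a_closed[OF GG.filt_additive_subgroup aG bG] by simp
next
  fix c a assume c: "c \<in> carrier K" and "a \<in> FG x"
  then have aF: "a \<in> F (x \<circ> Inl)" and aG: "hc (x \<circ> Inl) a \<in> G (x \<circ> Inr)"
    using mem_compF_iff by auto
  show "c \<odot>\<^bsub>A\<^esub> a \<in> FG x"
    using mem_compF_iff FF.filt_smult[OF c aF] GG.filt_smult[OF c aG]
      FF.hcls_smult[OF algebra.module[OF algebra_A] aF c] by simp
qed

lemma compF_filtration: "filtration K A (lexcomp lt1 lt2) FG"
  unfolding filtration_def
proof (intro conjI allI ballI impI)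
  fix x show "submodule (FG x) K A" by (rule compF_submodule)
next
  fix x y assume xy: "lexcomp lt1 lt2 x y"
  show "FG x \<subseteq> FG y"
  proof (cases "lt1 (x \<circ> Inl) (y \<circ> Inl)")
    case True
    then have "FG x \<subseteq> Flt (y \<circ> Inl)" using FF.filt_subset_flt mem_compF_iff by blast
    then show ?thesis using mem_compF_iff FF.flt_subset_filt hc_mem_Glt GG.flt_subset_filt by blast
  next
    case False
    then have "x \<circ> Inl = y \<circ> Inl" "lt2 (x \<circ> Inr) (y \<circ> Inr)" using xy unfolding lexcomp_def by auto
    then show ?thesis using GG.filt_mono[of "x \<circ> Inr" "y \<circ> Inr"] mem_compF_iff by auto
  qed
next
  fix x y a b assume "a \<in> FG x" and "b \<in> FG y"
  then have aF: "a \<in> F (x \<circ> Inl)" and aG: "hc (x \<circ> Inl) a \<in> G (x \<circ> Inr)"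
    and bF: "b \<in> F (y \<circ> Inl)" and bG: "hc (y \<circ> Inl) b \<in> G (y \<circ> Inr)"
    using mem_compF_iff by auto
  show "a \<otimes> b \<in> FG (x + y)"
    using mem_compF_iff FF.filt_mult[OF aF bF] FF.hcls_mult[OF aF bF, symmetric]
      GG.filt_mult[OF aG bG] by simp
next
  have "carrier A \<subseteq> (\<Union>x. FG x)"
  proof
    fix a assume "a \<in> carrier A"
    then obtain w where w: "a \<in> F w" using FF.filt_covers by blast
    then obtain u where "hc w a \<in> G u" using GG.filt_covers[OF FF.hcls_closed[OF w]] by blast
    then have "a \<in> FG (case_sum w u)" using mem_compF_iff w by simp
    then show "a \<in> (\<Union>x. FG x)" by blast
  qed
  then show "(\<Union>x. FG x) = carrier A" using mem_compF_iff FF.filt_closed by blast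
qed

end

sublocale composite_filtration \<subseteq> FGF: filtered_ring A K "lexcomp lt1 lt2" "compF A lt1 F G"
  using domain_A tot_ordered_group_lexcomp[OF tot1 tot2] compF_filtration ex_nonzero_fun
  unfolding filtered_ring_def filtered_ring_axioms_def
  by (simp add: domain_def)

context composite_filtration
begin

lemma a_rcos_compF_lt_of_flt:
  assumes "a \<in> carrier A" and "b \<in> carrier A" and "Flt w +> a = Flt w +> b"
  shows "FGlt (case_sum w u) +> a = FGlt (case_sum w u) +> b"
  using FF.a_rcos_eq_mono[OF FF.flt_additive_subgroup FGF.flt_additive_subgroup _ assms]
    flt_subset_compF_lt[of "case_sum w u"] by simp

lemma mem_Glt_iff_components:
  assumes d: "d \<in> carrier R"
  shows "d \<in> Glt u \<longleftrightarrow> (\<forall>w. crep (d w) \<in> FGlt (case_sum w u))"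
proof
  assume "d \<in> Glt u"
  then show "\<forall>w. crep (d w) \<in> FGlt (case_sum w u)" using crep_component_mem_compF_lt by blast
next
  assume "\<forall>w. crep (d w) \<in> FGlt (case_sum w u)"
  then have "hc w (crep (d w)) \<in> Glt u" for w using mem_compF_lt_iff by simp
  then have "finsum R (\<lambda>w. hc w (crep (d w))) {w. d w \<noteq> Flt w} \<in> Glt u"
    by (intro FF.GR.finsum_additive_subgroup_closed[OF GG.flt_additive_subgroup
          FF.gr_carrierD(4)[OF d]]) blast
  then show "d \<in> Glt u" using FF.gr_eq_finsum_hcls[OF d] by simp
qed

lemma a_rcos_Glt_eq_iff:
  assumes r: "r \<in> carrier R" and r': "r' \<in> carrier R"
  shows "Glt u +>\<^bsub>R\<^esub> r = Glt u +>\<^bsub>R\<^esub> r'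
    \<longleftrightarrow> (\<forall>w. FGlt (case_sum w u) +> crep (r w) = FGlt (case_sum w u) +> crep (r' w))"
proof -
  define d where "d = r \<ominus>\<^bsub>R\<^esub> r'"
  have dc: "d \<in> carrier R" unfolding d_def using FF.GR.minus_closed[OF r r'] .
  have component: "crep (d w) \<in> FGlt (case_sum w u)
      \<longleftrightarrow> FGlt (case_sum w u) +> crep (r w) = FGlt (case_sum w u) +> crep (r' w)" for w
  proof -
    have cs: "crep (r w) \<in> carrier A" "crep (r' w) \<in> carrier A" "crep (d w) \<in> carrier A"
      using FF.gr_carrierD(3) r r' dc by auto
    have "FGlt (case_sum w u) +> crep (d w) = FGlt (case_sum w u) +> (crep (r w) \<ominus> crep (r' w))"
      using FF.a_rcos_crep_gr_minus[OF r r'] cs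
      by (intro a_rcos_compF_lt_of_flt) (auto simp: d_def)
    then show ?thesis
      using FF.a_rcos_eq_subgroup_iff[OF FGF.flt_additive_subgroup] FF.minus_closed cs
        FF.a_rcos_eq_iff_minus_mem[OF FGF.flt_additive_subgroup] by metis
  qed
  have "Glt u +>\<^bsub>R\<^esub> r = Glt u +>\<^bsub>R\<^esub> r' \<longleftrightarrow> d \<in> Glt u"
    unfolding d_def by (rule FF.GR.a_rcos_eq_iff_minus_mem[OF GG.flt_additive_subgroup r r'])
  also have "\<dots> \<longleftrightarrow> (\<forall>w. crep (d w) \<in> FGlt (case_sum w u))"
    by (rule mem_Glt_iff_components[OF dc])
  finally show ?thesis using component by simp
qed

end

section \<open>Identifying the two associated graded rings\<close>

definition bicomponent_rep ::
  "(('l \<Rightarrow> int) \<Rightarrow> (('m \<Rightarrow> int) \<Rightarrow> 'b set) set) \<Rightarrow> ('m + 'l \<Rightarrow> int) \<Rightarrow> 'b" where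
  "bicomponent_rep s x = crep (crep (s (x \<circ> Inr)) (x \<circ> Inl))"

lemma bicomponent_rep_case_sum [simp]:
  "bicomponent_rep s (case_sum w u) = crep (crep (s u) w)"
  by (simp add: bicomponent_rep_def)

context composite_filtration
begin

definition flatten ::
  "(('l \<Rightarrow> int) \<Rightarrow> (('m \<Rightarrow> int) \<Rightarrow> 'b set) set) \<Rightarrow> ('m + 'l \<Rightarrow> int) \<Rightarrow> 'b set" where
  "flatten s = (\<lambda>x. FGlt x +> bicomponent_rep s x)"

lemma bicomponent_rep_mem_compF:
  assumes s: "s \<in> carrier S"
  shows "bicomponent_rep s x \<in> FG x"
  using crep_component_mem_compF[OF GG.gr_carrierD(1)[OF s, of "x \<circ> Inr"], of "x \<circ> Inl"]
  unfolding bicomponent_rep_def by simp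

lemma bicomponent_rep_closed: "s \<in> carrier S \<Longrightarrow> bicomponent_rep s x \<in> carrier A"
  using bicomponent_rep_mem_compF FGF.filt_closed by blast

lemma a_rcos_bicomponent_rep:
  assumes s: "s \<in> carrier S" and q: "q \<in> carrier R" and e: "s u = Glt u +>\<^bsub>R\<^esub> q"
  shows "FGlt (case_sum w u) +> bicomponent_rep s (case_sum w u) = FGlt (case_sum w u) +> crep (q w)"
proof -
  have "Glt u +>\<^bsub>R\<^esub> crep (s u) = Glt u +>\<^bsub>R\<^esub> q"
    using GG.gr_carrierD(2)[OF s, of u] e by simp
  then show ?thesis
    using a_rcos_Glt_eq_iff[OF GG.filt_closed[OF GG.gr_carrierD(1)[OF s]] q] by simp
qed

lemma bicomponent_rep_mem_compF_lt:
  assumes s: "s \<in> carrier S"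
    and z: "s (x \<circ> Inr) = Glt (x \<circ> Inr) \<or> crep (s (x \<circ> Inr)) (x \<circ> Inl) = Flt (x \<circ> Inl)"
  shows "bicomponent_rep s x \<in> FGlt x"
  using z
proof
  assume "s (x \<circ> Inr) = Glt (x \<circ> Inr)"
  then have "crep (s (x \<circ> Inr)) \<in> Glt (x \<circ> Inr)" using GG.gr_apply_eq_flt_iff[OF s] by simp
  from crep_component_mem_compF_lt[OF this, of "x \<circ> Inl"] show ?thesis
    unfolding bicomponent_rep_def by simp
next
  assume "crep (s (x \<circ> Inr)) (x \<circ> Inl) = Flt (x \<circ> Inl)"
  then have "crep (crep (s (x \<circ> Inr)) (x \<circ> Inl)) \<in> Flt (x \<circ> Inl)"
    using FF.gr_apply_eq_flt_iff[OF GG.filt_closed[OF GG.gr_carrierD(1)[OF s]]] by simp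
  then show ?thesis unfolding bicomponent_rep_def using flt_subset_compF_lt by blast
qed

lemma flatten_eq_flt_iff:
  assumes s: "s \<in> carrier S"
  shows "flatten s x = FGlt x \<longleftrightarrow> bicomponent_rep s x \<in> FGlt x"
  unfolding flatten_def
  using FF.a_rcos_eq_subgroup_iff[OF FGF.flt_additive_subgroup bicomponent_rep_closed[OF s]] by simp

lemma flatten_closed:
  assumes s: "s \<in> carrier S"
  shows "flatten s \<in> carrier T"
proof -
  have "{x. flatten s x \<noteq> FGlt x}
      \<subseteq> (\<lambda>(u, w). case_sum w u) ` (SIGMA u:{u. s u \<noteq> Glt u}. {w. crep (s u) w \<noteq> Flt w})"
  proof
    fix x assume "x \<in> {x. flatten s x \<noteq> FGlt x}"
    then have "s (x \<circ> Inr) \<noteq> Glt (x \<circ> Inr)" "crep (s (x \<circ> Inr)) (x \<circ> Inl) \<noteq> Flt (x \<circ> Inl)"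
      using bicomponent_rep_mem_compF_lt[OF s] flatten_eq_flt_iff[OF s] by auto
    then show "x \<in> (\<lambda>(u, w). case_sum w u) ` (SIGMA u:{u. s u \<noteq> Glt u}. {w. crep (s u) w \<noteq> Flt w})"
      by (auto intro!: image_eqI[of _ _ "(x \<circ> Inr, x \<circ> Inl)"])
  qed
  moreover have "finite (SIGMA u:{u. s u \<noteq> Glt u}. {w. crep (s u) w \<noteq> Flt w})"
    using GG.gr_carrierD(4)[OF s] FF.gr_carrierD(4)[OF GG.filt_closed[OF GG.gr_carrierD(1)[OF s]]]
    by auto
  ultimately have "finite {x. flatten s x \<noteq> FGlt x}" by (rule finite_subset[OF _ finite_imageI])
  moreover have "\<forall>x. \<exists>a\<in>FG x. flatten s x = FGlt x +> a"
    unfolding flatten_def using bicomponent_rep_mem_compF[OF s] by blast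
  ultimately show ?thesis unfolding FGF.gr_simps(1) gr_carrier_def by blast
qed

lemma a_rcos_crep_flatten:
  assumes s: "s \<in> carrier S"
  shows "FGlt x +> crep (flatten s x) = FGlt x +> bicomponent_rep s x"
  unfolding flatten_def by (rule FF.a_rcos_crep[OF FGF.flt_additive_subgroup bicomponent_rep_closed[OF s]])

lemma flatten_add:
  assumes s1: "s1 \<in> carrier S" and s2: "s2 \<in> carrier S"
  shows "flatten (s1 \<oplus>\<^bsub>S\<^esub> s2) = flatten s1 \<oplus>\<^bsub>T\<^esub> flatten s2"
proof
  fix x :: "'m + 'l \<Rightarrow> int"
  obtain w u where x: "x = case_sum w u" by (metis case_sum_comp_Inl_Inr)
  define r1 where "r1 = crep (s1 u)"
  define r2 where "r2 = crep (s2 u)"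
  have rc: "r1 \<in> carrier R" "r2 \<in> carrier R"
    unfolding r1_def r2_def using GG.gr_carrierD(1) GG.filt_closed s1 s2 by blast+
  have c: "crep (r1 w) \<in> carrier A" "crep (r2 w) \<in> carrier A" using FF.gr_carrierD(3) rc by auto
  have "(s1 \<oplus>\<^bsub>S\<^esub> s2) u = Glt u +>\<^bsub>R\<^esub> (r1 \<oplus>\<^bsub>R\<^esub> r2)"
    by (simp add: GG.gr_simps(4) r1_def r2_def)
  then have "flatten (s1 \<oplus>\<^bsub>S\<^esub> s2) x = FGlt x +> crep ((r1 \<oplus>\<^bsub>R\<^esub> r2) w)"
    using a_rcos_bicomponent_rep[OF SS.add.m_closed[OF s1 s2] FF.GR.add.m_closed[OF rc]]
    unfolding flatten_def x by simp
  also have "\<dots> = FGlt x +> (crep (r1 w) \<oplus> crep (r2 w))"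
    unfolding x using FF.a_rcos_crep_gr_add[OF rc] FF.gr_carrierD(3) rc c
    by (intro a_rcos_compF_lt_of_flt) auto
  also have "\<dots> = FGlt x +> (crep (flatten s1 x) \<oplus> crep (flatten s2 x))"
    using a_rcos_crep_flatten[OF s1, of x] a_rcos_crep_flatten[OF s2, of x] c
      FGF.gr_carrierD(3)[OF flatten_closed[OF s1]] FGF.gr_carrierD(3)[OF flatten_closed[OF s2]]
    by (intro FF.a_rcos_add_cong[OF FGF.flt_additive_subgroup]) (auto simp: x r1_def r2_def)
  also have "\<dots> = (flatten s1 \<oplus>\<^bsub>T\<^esub> flatten s2) x" by (simp add: FGF.gr_simps)
  finally show "flatten (s1 \<oplus>\<^bsub>S\<^esub> s2) x = (flatten s1 \<oplus>\<^bsub>T\<^esub> flatten s2) x" .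
qed

lemma flatten_smult:
  assumes c: "c \<in> carrier K" and s: "s \<in> carrier S"
  shows "flatten (c \<odot>\<^bsub>S\<^esub> s) = c \<odot>\<^bsub>T\<^esub> flatten s"
proof
  fix x :: "'m + 'l \<Rightarrow> int"
  obtain w u where x: "x = case_sum w u" by (metis case_sum_comp_Inl_Inr)
  define r where "r = crep (s u)"
  have rc: "r \<in> carrier R" unfolding r_def using GG.filt_closed[OF GG.gr_carrierD(1)[OF s]] .
  have module_A: "module K A" by (rule algebra.module[OF algebra_A])
  have cr: "crep (r w) \<in> carrier A" "c \<odot>\<^bsub>A\<^esub> crep (r w) \<in> carrier A"
    using FF.gr_carrierD(3)[OF rc] module.smult_closed[OF module_A c] by auto
  have "(c \<odot>\<^bsub>S\<^esub> s) u = Glt u +>\<^bsub>R\<^esub> (c \<odot>\<^bsub>R\<^esub> r)"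
    by (simp add: GG.gr_simps(5) r_def)
  then have "flatten (c \<odot>\<^bsub>S\<^esub> s) x = FGlt x +> crep ((c \<odot>\<^bsub>R\<^esub> r) w)"
    using a_rcos_bicomponent_rep[OF GG.gr_smult_closed[OF c s] FF.gr_smult_closed[OF c rc]]
    unfolding flatten_def x by simp
  also have "\<dots> = FGlt x +> (c \<odot>\<^bsub>A\<^esub> crep (r w))"
    unfolding x using FF.gr_carrierD(3)[OF FF.gr_smult_closed[OF c rc]] cr
      FF.a_rcos_crep[OF FF.flt_additive_subgroup cr(2)]
    by (intro a_rcos_compF_lt_of_flt) (auto simp: FF.gr_simps(5))
  also have "\<dots> = FGlt x +> (c \<odot>\<^bsub>A\<^esub> crep (flatten s x))"
  proof -
    have "crep (r w) \<ominus> crep (flatten s x) \<in> FGlt x"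
      using a_rcos_crep_flatten[OF s, of x, symmetric] FGF.gr_carrierD(3)[OF flatten_closed[OF s]] cr
        FF.a_rcos_eq_iff_minus_mem[OF FGF.flt_additive_subgroup] by (simp add: x r_def)
    then have "c \<odot>\<^bsub>A\<^esub> (crep (r w) \<ominus> crep (flatten s x)) \<in> FGlt x"
      using FGF.flt_smult[OF c] by blast
    moreover have "c \<odot>\<^bsub>A\<^esub> (crep (r w) \<ominus> crep (flatten s x))
        = c \<odot>\<^bsub>A\<^esub> crep (r w) \<ominus> c \<odot>\<^bsub>A\<^esub> crep (flatten s x)"
      using FGF.gr_carrierD(3)[OF flatten_closed[OF s]] cr
        module.smult_r_distr[OF module_A c] module.smult_r_minus[OF module_A c]
      by (simp add: a_minus_def)
    ultimately show ?thesis
      using FF.a_rcos_eq_iff_minus_mem[OF FGF.flt_additive_subgroup] cr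
        module.smult_closed[OF module_A c FGF.gr_carrierD(3)[OF flatten_closed[OF s]]] by simp
  qed
  also have "\<dots> = (c \<odot>\<^bsub>T\<^esub> flatten s) x" by (simp add: FGF.gr_simps)
  finally show "flatten (c \<odot>\<^bsub>S\<^esub> s) x = (c \<odot>\<^bsub>T\<^esub> flatten s) x" .
qed

lemma flatten_hcls:
  assumes a: "a \<in> FG x"
  shows "flatten (hcls R lt2 G (x \<circ> Inr) (hc (x \<circ> Inl) a)) = hcls A (lexcomp lt1 lt2) FG x a"
proof
  fix y :: "'m + 'l \<Rightarrow> int"
  obtain w u where x: "x = case_sum w u" by (metis case_sum_comp_Inl_Inr)
  obtain w' u' where y: "y = case_sum w' u'" by (metis case_sum_comp_Inl_Inr)
  have aF: "a \<in> F w" and aG: "hc w a \<in> G u" using a mem_compF_iff x by auto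
  define s where "s = hcls R lt2 G u (hc w a)"
  define q where "q = (if u' = u then hc w a else \<zero>\<^bsub>R\<^esub>)"
  have q: "q \<in> carrier R" "s u' = Glt u' +>\<^bsub>R\<^esub> q"
    using GG.filt_closed[OF aG] GG.hcls_apply FF.GR.a_rcos_zero_eq[OF GG.flt_additive_subgroup]
    unfolding q_def s_def by auto
  have "Flt w' +> crep (q w') = Flt w' +> (if y = x then a else \<zero>)"
  proof (cases "u' = u")
    case True
    then show ?thesis
      using FF.a_rcos_crep_hcls[OF aF, of w'] unfolding q_def x y by (simp add: case_sum_eq_iff)
  next
    case False
    then have "crep (q w') \<in> Flt w'" using FF.crep_flt unfolding q_def by (simp add: FF.gr_simps)
    then show ?thesis
      using False FF.a_rcos_subgroup_mem FF.a_rcos_zero_eq FF.flt_additive_subgroup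
      unfolding x y by (simp add: case_sum_eq_iff)
  qed
  then have "FGlt y +> crep (q w') = FGlt y +> (if y = x then a else \<zero>)"
    unfolding y using FF.gr_carrierD(3)[OF q(1)] FF.filt_closed[OF aF]
    by (intro a_rcos_compF_lt_of_flt) auto
  then have "flatten s y = FGlt y +> (if y = x then a else \<zero>)"
    using a_rcos_bicomponent_rep[OF GG.hcls_closed[OF aG, folded s_def] q] unfolding flatten_def y
    by simp
  then show "flatten (hcls R lt2 G (x \<circ> Inr) (hc (x \<circ> Inl) a)) y = hcls A (lexcomp lt1 lt2) FG x a y"
    using FGF.hcls_apply[where w = x and a = a] FF.a_rcos_zero_eq[OF FGF.flt_additive_subgroup]
    unfolding s_def x by (cases "y = case_sum w u") auto
qed

lemma one_mem_compF: "\<one> \<in> FG 0"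
proof -
  have "\<one> \<in> F 0" using FF.hcls_closedD[OF FF.one_closed] FF.GR.one_closed FF.gr_simps(3) by simp
  moreover have "\<one>\<^bsub>R\<^esub> \<in> G 0"
    using GG.hcls_closedD[OF FF.GR.one_closed] SS.one_closed GG.gr_simps(3) by simp
  ultimately show ?thesis using mem_compF_iff FF.gr_simps(3) by simp
qed

lemma flatten_one: "flatten \<one>\<^bsub>S\<^esub> = \<one>\<^bsub>T\<^esub>"
  using flatten_hcls[OF one_mem_compF] GG.gr_simps(3) FF.gr_simps(3) FGF.gr_simps(3) by simp

lemma flatten_zero: "flatten \<zero>\<^bsub>S\<^esub> = \<zero>\<^bsub>T\<^esub>"
proof
  fix x :: "'m + 'l \<Rightarrow> int"
  have "bicomponent_rep \<zero>\<^bsub>S\<^esub> x \<in> FGlt x"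
    by (rule bicomponent_rep_mem_compF_lt[OF SS.zero_closed]) (simp add: GG.gr_simps(2))
  then show "flatten \<zero>\<^bsub>S\<^esub> x = \<zero>\<^bsub>T\<^esub> x"
    using flatten_eq_flt_iff[OF SS.zero_closed] FGF.gr_simps(2) by simp
qed

text \<open>The bidegrees \<open>(v, u')\<close> that occur when the degree-\<open>x\<close> part of a product in \<open>S\<close> is
  expanded first in \<open>R\<close> and then in \<open>A\<close>.\<close>

definition mult_support ::
  "(('l \<Rightarrow> int) \<Rightarrow> (('m \<Rightarrow> int) \<Rightarrow> 'b set) set) \<Rightarrow> (('l \<Rightarrow> int) \<Rightarrow> (('m \<Rightarrow> int) \<Rightarrow> 'b set) set)
    \<Rightarrow> ('m + 'l \<Rightarrow> int) \<Rightarrow> ('m + 'l \<Rightarrow> int) set" where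
  "mult_support s1 s2 x = (\<lambda>(u', v). case_sum v u') `
     (SIGMA u':{u'. s1 u' \<noteq> Glt u' \<and> s2 ((x \<circ> Inr) - u') \<noteq> Glt ((x \<circ> Inr) - u')}.
        {v. crep (s1 u') v \<noteq> Flt v \<and> crep (s2 ((x \<circ> Inr) - u')) ((x \<circ> Inl) - v) \<noteq> Flt ((x \<circ> Inl) - v)})"

lemma finite_mult_support:
  assumes s1: "s1 \<in> carrier S" and s2: "s2 \<in> carrier S"
  shows "finite (mult_support s1 s2 x)"
  unfolding mult_support_def
proof (intro finite_imageI finite_SigmaI)
  show "finite {u'. s1 u' \<noteq> Glt u' \<and> s2 ((x \<circ> Inr) - u') \<noteq> Glt ((x \<circ> Inr) - u')}"
    by (rule finite_subset[OF _ GG.gr_carrierD(4)[OF s1]]) auto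
  show "finite {v. crep (s1 u') v \<noteq> Flt v \<and> crep (s2 ((x \<circ> Inr) - u')) ((x \<circ> Inl) - v) \<noteq> Flt ((x \<circ> Inl) - v)}"
    for u'
    by (rule finite_subset[OF _ FF.gr_carrierD(4)[OF GG.filt_closed[OF GG.gr_carrierD(1)[OF s1]]]])
      auto
qed

lemma bicomponent_rep_mult_support:
  assumes s1: "s1 \<in> carrier S" and s2: "s2 \<in> carrier S"
  shows "{y. bicomponent_rep s1 y \<notin> FGlt y \<and> bicomponent_rep s2 (x - y) \<notin> FGlt (x - y)}
    \<subseteq> mult_support s1 s2 x"
proof
  fix y assume "y \<in> {y. bicomponent_rep s1 y \<notin> FGlt y \<and> bicomponent_rep s2 (x - y) \<notin> FGlt (x - y)}"
  then have "s1 (y \<circ> Inr) \<noteq> Glt (y \<circ> Inr)" "crep (s1 (y \<circ> Inr)) (y \<circ> Inl) \<noteq> Flt (y \<circ> Inl)"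
    "s2 ((x - y) \<circ> Inr) \<noteq> Glt ((x - y) \<circ> Inr)"
    "crep (s2 ((x - y) \<circ> Inr)) ((x - y) \<circ> Inl) \<noteq> Flt ((x - y) \<circ> Inl)"
    using bicomponent_rep_mem_compF_lt[OF s1, of y] bicomponent_rep_mem_compF_lt[OF s2, of "x - y"]
    by auto
  then show "y \<in> mult_support s1 s2 x"
    unfolding mult_support_def by (auto intro!: image_eqI[of _ _ "(y \<circ> Inr, y \<circ> Inl)"])
qed

lemma flatten_mult_eq_finsum:
  assumes s1: "s1 \<in> carrier S" and s2: "s2 \<in> carrier S"
  shows "flatten (s1 \<otimes>\<^bsub>S\<^esub> s2) x
    = FGlt x +> finsum A (\<lambda>y. bicomponent_rep s1 y \<otimes> bicomponent_rep s2 (x - y)) (mult_support s1 s2 x)"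
proof -
  obtain w u where x: "x = case_sum w u" by (metis case_sum_comp_Inl_Inr)
  define U where "U = {u'. s1 u' \<noteq> Glt u' \<and> s2 (u - u') \<noteq> Glt (u - u')}"
  define r1 where "r1 u' = crep (s1 u')" for u'
  define r2 where "r2 u' = crep (s2 (u - u'))" for u'
  define V where "V u' = {v. r1 u' v \<noteq> Flt v \<and> r2 u' (w - v) \<noteq> Flt (w - v)}" for u'
  have r1: "r1 u' \<in> carrier R" and r2: "r2 u' \<in> carrier R" for u'
    unfolding r1_def r2_def
    using GG.filt_closed[OF GG.gr_carrierD(1)[OF s1]] GG.filt_closed[OF GG.gr_carrierD(1)[OF s2]]
    by auto
  have r: "r1 \<in> U \<rightarrow> carrier R" "r2 \<in> U \<rightarrow> carrier R" using r1 r2 by auto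
  have finU: "finite U" by (rule finite_subset[OF _ GG.gr_carrierD(4)[OF s1]]) (auto simp: U_def)
  have c: "crep (r1 u' v) \<otimes> crep (r2 u' (w - v)) \<in> carrier A" for u' v
    using FF.gr_carrierD(3)[OF r1] FF.gr_carrierD(3)[OF r2] by simp
  have p: "(\<lambda>u'. r1 u' \<otimes>\<^bsub>R\<^esub> r2 u') \<in> U \<rightarrow> carrier R" using r by auto
  have sc: "(\<lambda>(u', v). crep (r1 u' v) \<otimes> crep (r2 u' (w - v))) \<in> Sigma U V \<rightarrow> carrier A"
    using c by auto
  have "(s1 \<otimes>\<^bsub>S\<^esub> s2) u = Glt u +>\<^bsub>R\<^esub> finsum R (\<lambda>u'. r1 u' \<otimes>\<^bsub>R\<^esub> r2 u') U"
    unfolding GG.gr_simps(6) U_def r1_def r2_def by simp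
  then have "flatten (s1 \<otimes>\<^bsub>S\<^esub> s2) x = FGlt x +> crep (finsum R (\<lambda>u'. r1 u' \<otimes>\<^bsub>R\<^esub> r2 u') U w)"
    using a_rcos_bicomponent_rep[OF SS.m_closed[OF s1 s2] FF.GR.finsum_closed[OF p]]
    unfolding flatten_def x by simp
  also have "\<dots> = FGlt x +> finsum A (\<lambda>(u', v). crep (r1 u' v) \<otimes> crep (r2 u' (w - v))) (Sigma U V)"
    using FF.gr_carrierD(3)[OF FF.GR.finsum_closed[OF p]] FF.finsum_closed[OF sc]
      FF.a_rcos_crep_gr_finsum_mult[OF finU r]
    unfolding x V_def by (rule a_rcos_compF_lt_of_flt)
  also have "finsum A (\<lambda>(u', v). crep (r1 u' v) \<otimes> crep (r2 u' (w - v))) (Sigma U V)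
      = finsum A (\<lambda>y. bicomponent_rep s1 y \<otimes> bicomponent_rep s2 (x - y)) (mult_support s1 s2 x)"
  proof -
    let ?g = "\<lambda>y. bicomponent_rep s1 y \<otimes> bicomponent_rep s2 (x - y)"
    have supp: "mult_support s1 s2 x = (\<lambda>(u', v). case_sum v u') ` Sigma U V"
      unfolding mult_support_def x U_def V_def r1_def r2_def by simp
    have "finsum A ?g ((\<lambda>(u', v). case_sum v u') ` Sigma U V)
        = finsum A (\<lambda>(u', v). ?g (case_sum v u')) (Sigma U V)"
      by (rule FF.finsum_reindex_case_sum) (use bicomponent_rep_closed s1 s2 in blast)
    then show ?thesis unfolding supp by (simp add: x r1_def r2_def)
  qed
  finally show ?thesis .
qed

lemma flatten_mult:
  assumes s1: "s1 \<in> carrier S" and s2: "s2 \<in> carrier S"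
  shows "flatten (s1 \<otimes>\<^bsub>S\<^esub> s2) = flatten s1 \<otimes>\<^bsub>T\<^esub> flatten s2"
proof
  fix x :: "'m + 'l \<Rightarrow> int"
  define g where "g y = bicomponent_rep s1 y \<otimes> bicomponent_rep s2 (x - y)" for y
  define P where "P = mult_support s1 s2 x"
  define Y where "Y = {y. flatten s1 y \<noteq> FGlt y \<and> flatten s2 (x - y) \<noteq> FGlt (x - y)}"
  have gc: "g \<in> P \<rightarrow> carrier A" "g \<in> Y \<rightarrow> carrier A"
    unfolding g_def using bicomponent_rep_closed s1 s2 by auto
  have finP: "finite P" unfolding P_def by (rule finite_mult_support[OF s1 s2])
  have YP: "Y \<subseteq> P"
    using bicomponent_rep_mult_support[OF s1 s2, of x] flatten_eq_flt_iff s1 s2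
    unfolding Y_def P_def by auto
  have "flatten (s1 \<otimes>\<^bsub>S\<^esub> s2) x = FGlt x +> finsum A g P"
    unfolding g_def P_def by (rule flatten_mult_eq_finsum[OF s1 s2])
  also have "\<dots> = FGlt x +> finsum A g Y"
  proof (rule FF.a_rcos_finsum_mono_neutral[OF FGF.flt_additive_subgroup finP YP gc(1)])
    fix y assume "y \<in> P - Y"
    then have "bicomponent_rep s1 y \<in> FGlt y \<or> bicomponent_rep s2 (x - y) \<in> FGlt (x - y)"
      using flatten_eq_flt_iff s1 s2 unfolding Y_def by auto
    then have "g y \<in> FGlt (y + (x - y))"
      using FGF.flt_mult_left[OF _ bicomponent_rep_mem_compF[OF s2]]
        FGF.flt_mult_right[OF bicomponent_rep_mem_compF[OF s1]] unfolding g_def by blast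
    then show "g y \<in> FGlt x" by simp
  qed
  also have "\<dots> = FGlt x +> finsum A (\<lambda>y. crep (flatten s1 y) \<otimes> crep (flatten s2 (x - y))) Y"
  proof (rule FF.a_rcos_finsum_cong[OF FGF.flt_additive_subgroup finite_subset[OF YP finP] gc(2)])
    show "(\<lambda>y. crep (flatten s1 y) \<otimes> crep (flatten s2 (x - y))) \<in> Y \<rightarrow> carrier A"
      using FGF.gr_carrierD(3) flatten_closed s1 s2 by blast
    show "FGlt x +> g y = FGlt x +> (crep (flatten s1 y) \<otimes> crep (flatten s2 (x - y)))" for y
      using FGF.a_rcos_mult_cong[where y = y and z = "x - y", OF bicomponent_rep_closed[OF s1]
          FGF.gr_carrierD(1)[OF flatten_closed[OF s1]] a_rcos_crep_flatten[OF s1, symmetric]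
          bicomponent_rep_mem_compF[OF s2] FGF.gr_carrierD(3)[OF flatten_closed[OF s2]]
          a_rcos_crep_flatten[OF s2, symmetric]]
      unfolding g_def by simp
  qed
  also have "\<dots> = (flatten s1 \<otimes>\<^bsub>T\<^esub> flatten s2) x" unfolding Y_def FGF.gr_simps(6) by simp
  finally show "flatten (s1 \<otimes>\<^bsub>S\<^esub> s2) x = (flatten s1 \<otimes>\<^bsub>T\<^esub> flatten s2) x" .
qed

lemma flatten_inj: "inj_on flatten (carrier S)"
proof (rule inj_onI)
  fix s1 s2 assume s1: "s1 \<in> carrier S" and s2: "s2 \<in> carrier S" and e: "flatten s1 = flatten s2"
  show "s1 = s2"
  proof
    fix u
    have "FGlt (case_sum w u) +> crep (crep (s1 u) w) = FGlt (case_sum w u) +> crep (crep (s2 u) w)"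
      for w
      using fun_cong[OF e, of "case_sum w u"] unfolding flatten_def by simp
    then have "Glt u +>\<^bsub>R\<^esub> crep (s1 u) = Glt u +>\<^bsub>R\<^esub> crep (s2 u)"
      using a_rcos_Glt_eq_iff[OF GG.filt_closed[OF GG.gr_carrierD(1)[OF s1]]
          GG.filt_closed[OF GG.gr_carrierD(1)[OF s2]]] by blast
    then show "s1 u = s2 u" using GG.gr_carrierD(2)[OF s1, of u] GG.gr_carrierD(2)[OF s2, of u] by metis
  qed
qed

definition slice :: "(('m + 'l \<Rightarrow> int) \<Rightarrow> 'b set) \<Rightarrow> ('l \<Rightarrow> int) \<Rightarrow> ('m \<Rightarrow> int) \<Rightarrow> 'b set" where
  "slice t u = finsum R (\<lambda>w. hc w (crep (t (case_sum w u)))) {w. t (case_sum w u) \<noteq> FGlt (case_sum w u)}"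

definition unflatten ::
  "(('m + 'l \<Rightarrow> int) \<Rightarrow> 'b set) \<Rightarrow> ('l \<Rightarrow> int) \<Rightarrow> (('m \<Rightarrow> int) \<Rightarrow> 'b set) set" where
  "unflatten t = (\<lambda>u. Glt u +>\<^bsub>R\<^esub> slice t u)"

lemma finite_slice_support:
  assumes t: "t \<in> carrier T"
  shows "finite {w. t (case_sum w u) \<noteq> FGlt (case_sum w u)}"
proof -
  have "inj (\<lambda>w. case_sum w u)" by (simp add: inj_on_def case_sum_eq_iff)
  then show ?thesis using finite_vimageI[OF FGF.gr_carrierD(4)[OF t]] by (simp add: vimage_def)
qed

lemma gr_compF_crep_mem:
  assumes t: "t \<in> carrier T"
  shows "crep (t (case_sum w u)) \<in> F w" and "hc w (crep (t (case_sum w u))) \<in> G u"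
  using FGF.gr_carrierD(1)[OF t, of "case_sum w u"] mem_compF_iff by simp_all

lemma slice_mem_G:
  assumes t: "t \<in> carrier T"
  shows "slice t u \<in> G u"
  unfolding slice_def
  by (rule FF.GR.finsum_additive_subgroup_closed[OF GG.filt_additive_subgroup finite_slice_support[OF t]])
    (use gr_compF_crep_mem(2)[OF t] in blast)

lemma unflatten_closed:
  assumes t: "t \<in> carrier T"
  shows "unflatten t \<in> carrier S"
proof -
  have "{u. unflatten t u \<noteq> Glt u} \<subseteq> (\<lambda>x. x \<circ> Inr) ` {x. t x \<noteq> FGlt x}"
  proof
    fix u assume u: "u \<in> {u. unflatten t u \<noteq> Glt u}"
    have "{w. t (case_sum w u) \<noteq> FGlt (case_sum w u)} \<noteq> {}"
    proof
      assume "{w. t (case_sum w u) \<noteq> FGlt (case_sum w u)} = {}"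
      then have "unflatten t u = Glt u"
        using FF.GR.a_rcos_zero_eq[OF GG.flt_additive_subgroup] unfolding unflatten_def slice_def by simp
      then show False using u by simp
    qed
    then obtain w where "t (case_sum w u) \<noteq> FGlt (case_sum w u)" by blast
    then show "u \<in> (\<lambda>x. x \<circ> Inr) ` {x. t x \<noteq> FGlt x}" by (auto intro!: image_eqI[of _ _ "case_sum w u"])
  qed
  then have "finite {u. unflatten t u \<noteq> Glt u}"
    using finite_subset FGF.gr_carrierD(4)[OF t] by blast
  moreover have "\<forall>u. \<exists>q\<in>G u. unflatten t u = Glt u +>\<^bsub>R\<^esub> q"
    unfolding unflatten_def using slice_mem_G[OF t] by blast
  ultimately show ?thesis unfolding GG.gr_simps(1) gr_carrier_def by blast
qed

lemma flatten_unflatten: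
  assumes t: "t \<in> carrier T"
  shows "flatten (unflatten t) = t"
proof
  fix x :: "'m + 'l \<Rightarrow> int"
  obtain w u where x: "x = case_sum w u" by (metis case_sum_comp_Inl_Inr)
  define W where "W = {w. t (case_sum w u) \<noteq> FGlt (case_sum w u)}"
  have q: "slice t u \<in> carrier R" using GG.filt_closed[OF slice_mem_G[OF t]] .
  have "flatten (unflatten t) x = FGlt x +> crep (slice t u w)"
    using a_rcos_bicomponent_rep[OF unflatten_closed[OF t] q] unfolding flatten_def x unflatten_def
    by simp
  also have "\<dots> = FGlt x +> (if w \<in> W then crep (t x) else \<zero>)"
    unfolding x slice_def W_def
    using FF.a_rcos_crep_finsum_hcls[OF finite_slice_support[OF t] gr_compF_crep_mem(1)[OF t]]
      FF.gr_carrierD(3)[OF GG.filt_closed[OF slice_mem_G[OF t]]] FF.filt_closed[OF gr_compF_crep_mem(1)[OF t]]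
    by (intro a_rcos_compF_lt_of_flt) (auto simp: slice_def)
  also have "\<dots> = t x"
    using FGF.gr_carrierD(2)[OF t, of x] FF.a_rcos_zero_eq[OF FGF.flt_additive_subgroup]
    unfolding W_def x by auto
  finally show "flatten (unflatten t) x = t x" .
qed

lemma flatten_bij: "bij_betw flatten (carrier S) (carrier T)"
  unfolding bij_betw_def
proof
  have "carrier T \<subseteq> flatten ` carrier S"
  proof
    fix t assume t: "t \<in> carrier T"
    show "t \<in> flatten ` carrier S"
      by (rule image_eqI[where x = "unflatten t"]) (simp_all add: flatten_unflatten[OF t] unflatten_closed[OF t])
  qed
  then show "flatten ` carrier S = carrier T" using flatten_closed by blast
qed (rule flatten_inj)

lemma flatten_ring_iso: "flatten \<in> ring_iso S T"
  by (rule ring_iso_memI[OF flatten_closed flatten_mult flatten_add flatten_one flatten_bij])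

lemma domain_gr_compF: "domain T"
  using SS.ring_iso_imp_img_domain[OF flatten_ring_iso] flatten_zero by simp

lemma gr_compF_iso:
  "\<exists>\<phi>. \<phi> \<in> ring_iso T S
    \<and> (\<forall>c\<in>carrier K. \<forall>f\<in>carrier T. \<phi> (c \<odot>\<^bsub>T\<^esub> f) = c \<odot>\<^bsub>S\<^esub> \<phi> f)
    \<and> (\<forall>x. \<forall>a\<in>FG x. \<phi> (hcls A (lexcomp lt1 lt2) FG x a) = hcls R lt2 G (x \<circ> Inr) (hc (x \<circ> Inl) a))"
proof -
  define \<phi> where "\<phi> = inv_into (carrier S) flatten"
  have left: "\<phi> (flatten s) = s" if "s \<in> carrier S" for s
    unfolding \<phi>_def using bij_betw_inv_into_left[OF flatten_bij that] .
  have into: "\<phi> f \<in> carrier S" "flatten (\<phi> f) = f" if "f \<in> carrier T" for f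
  proof -
    have "f \<in> flatten ` carrier S" using flatten_bij that by (simp add: bij_betw_def)
    then show "\<phi> f \<in> carrier S" unfolding \<phi>_def by (rule inv_into_into)
    show "flatten (\<phi> f) = f" unfolding \<phi>_def by (rule bij_betw_inv_into_right[OF flatten_bij that])
  qed
  have "\<phi> \<in> ring_iso T S"
    unfolding \<phi>_def by (rule ring_iso_set_sym[OF cring.axioms(1)[OF SS.is_cring] flatten_ring_iso])
  moreover have "\<forall>c\<in>carrier K. \<forall>f\<in>carrier T. \<phi> (c \<odot>\<^bsub>T\<^esub> f) = c \<odot>\<^bsub>S\<^esub> \<phi> f"
  proof (intro ballI)
    fix c f assume c: "c \<in> carrier K" and f: "f \<in> carrier T"
    have "c \<odot>\<^bsub>T\<^esub> f = flatten (c \<odot>\<^bsub>S\<^esub> \<phi> f)"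
      using flatten_smult[OF c into(1)[OF f]] into(2)[OF f] by simp
    then show "\<phi> (c \<odot>\<^bsub>T\<^esub> f) = c \<odot>\<^bsub>S\<^esub> \<phi> f"
      using left[OF GG.gr_smult_closed[OF c into(1)[OF f]]] by simp
  qed
  moreover have "\<forall>x. \<forall>a\<in>FG x. \<phi> (hcls A (lexcomp lt1 lt2) FG x a) = hcls R lt2 G (x \<circ> Inr) (hc (x \<circ> Inl) a)"
  proof (intro allI ballI)
    fix x a assume a: "a \<in> FG x"
    have "hcls R lt2 G (x \<circ> Inr) (hc (x \<circ> Inl) a) \<in> carrier S"
      using GG.hcls_closed a mem_compF_iff by blast
    from left[OF this] show "\<phi> (hcls A (lexcomp lt1 lt2) FG x a) = hcls R lt2 G (x \<circ> Inr) (hc (x \<circ> Inl) a)"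
      using flatten_hcls[OF a] by simp
  qed
  ultimately show ?thesis by blast
qed

end

theorem mainTheorem4:
  fixes K :: "'k ring" and A :: "('k, 'b) module"
    and lt1 :: "('m::finite \<Rightarrow> int) \<Rightarrow> ('m \<Rightarrow> int) \<Rightarrow> bool"
    and lt2 :: "('l::finite \<Rightarrow> int) \<Rightarrow> ('l \<Rightarrow> int) \<Rightarrow> bool"
    and F :: "('m \<Rightarrow> int) \<Rightarrow> 'b set"
    and G :: "('l \<Rightarrow> int) \<Rightarrow> (('m \<Rightarrow> int) \<Rightarrow> 'b set) set"
  assumes "field K" and "algebra K A" and "domain A"
    and "tot_ordered_group lt1" and "tot_ordered_group lt2"
    and "filtration K A lt1 F" and "domain (gr A lt1 F)"
    and "filtration K (gr A lt1 F) lt2 G" and "domain (gr (gr A lt1 F) lt2 G)"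
    and "grading_compatible lt1 F G"
  shows "tot_ordered_group (lexcomp lt1 lt2)
    \<and> filtration K A (lexcomp lt1 lt2) (compF A lt1 F G)
    \<and> domain (gr A (lexcomp lt1 lt2) (compF A lt1 F G))
    \<and> (\<exists>\<phi>. \<phi> \<in> ring_iso (gr A (lexcomp lt1 lt2) (compF A lt1 F G)) (gr (gr A lt1 F) lt2 G)
         \<and> (\<forall>c\<in>carrier K. \<forall>f\<in>carrier (gr A (lexcomp lt1 lt2) (compF A lt1 F G)).
              \<phi> (c \<odot>\<^bsub>gr A (lexcomp lt1 lt2) (compF A lt1 F G)\<^esub> f)
                = c \<odot>\<^bsub>gr (gr A lt1 F) lt2 G\<^esub> \<phi> f)
         \<and> (\<forall>x. \<forall>a\<in>compF A lt1 F G x.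
              \<phi> (hcls A (lexcomp lt1 lt2) (compF A lt1 F G) x a)
                = hcls (gr A lt1 F) lt2 G (x \<circ> Inr) (hcls A lt1 F (x \<circ> Inl) a)))"
proof -
  interpret composite_filtration K A lt1 lt2 F G
    by (rule composite_filtration.intro[OF assms(2-10)])
  show ?thesis
  proof (intro conjI)
    show "tot_ordered_group (lexcomp lt1 lt2)" by (rule tot_ordered_group_lexcomp[OF assms(4,5)])
  qed (rule compF_filtration domain_gr_compF gr_compF_iso)+
qed

end
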